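(* Let $s,\tilde s\in\mathbb{R}$, $0<p<\infty$ and $0<q,r\le\infty$. (1) If $s<\tilde s$ and $\frac sn+\frac1q=\frac{\tilde s}n+\frac1p$, then $L^{p,r}_{\tilde s}(\mathbb{R}^n)\hookrightarrow\dot K^s_{q,r}(\mathbb{R}^n)$, i.e. $\|f\|_{\dot K^s_{q,r}}\lesssim\|f\|_{L^{p,r}_{\tilde s}}$ for all $f\in L^{p,r}_{\tilde s}(\mathbb{R}^n)$. (2) If $s>\tilde s$ and $\frac sn+\frac1q=\frac{\tilde s}n+\frac1p$, then $\dot K^s_{q,r}(\mathbb{R}^n)\hookrightarrow L^{p,r}_{\tilde s}(\mathbb{R}^n)$, i.e. $\|f\|_{L^{p,r}_{\tilde s}}\lesssim\|f\|_{\dot K^s_{q,r}}$ for all $f\in\dot K^s_{q,r}(\mathbb{R}^n)$.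
   Context: For $j\in\mathbb{Z}$ let $A_j=\{x\in\mathbb{R}^n: 2^{j-1}\le|x|<2^j\}$. For $s\in\mathbb{R}$ and $0<q,r\le\infty$, the homogeneous Herz space $\dot K^s_{q,r}(\mathbb{R}^n)$ is the space of measurable $f$ with finite quasi-norm $\|f\|_{\dot K^s_{q,r}}=\big(\sum_{j\in\mathbb{Z}}[2^{js}\|f\chi_{A_j}\|_{L^q}]^r\big)^{1/r}$ for $r<\infty$, and $\sup_{j}2^{js}\|f\chi_{A_j}\|_{L^q}$ for $r=\infty$. For $0<p<\infty$, $0<r\le\infty$, the Lorentz space $L^{p,r}(\mathbb{R}^n)$ has quasi-norm $\|f\|_{L^{p,r}}=\big(\int_0^\infty[t^{1/p}f^*(t)]^r\,\frac{dt}t\big)^{1/r}$ (supremum of $t^{1/p}f^*(t)$ if $r=\infty$), where $f^*(t)=\inf\{\lambda>0: |\{x:|f(x)|>\lambda\}|\le t\}$ is the decreasing rearrangement; the weighted Lorentz space $L^{p,r}_{\tilde s}(\mathbb{R}^n)$ has quasi-norm $\|f\|_{L^{p,r}_{\tilde s}}=\||\cdot|^{\tilde s}f\|_{L^{p,r}}$. *)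

theory Defs
  imports "HOL-Analysis.Analysis"
begin

text \<open>Power of an extended nonnegative real with positive real exponent
  (used only with exponent > 0): \<open>\<infinity> ^ a = \<infinity>\<close>.\<close>
definition epow :: "ennreal \<Rightarrow> real \<Rightarrow> ennreal" where
  "epow x a = (if x = \<infinity> then \<infinity> else ennreal (enn2real x powr a))"

text \<open>Reciprocal of an exponent in (0,\<infinity>]; 1/\<infinity> = 0.\<close>
definition recip :: "ennreal \<Rightarrow> real" where
  "recip q = enn2real (inverse q)"

definition Lq_norm :: "ennreal \<Rightarrow> ('a::euclidean_space \<Rightarrow> real) \<Rightarrow> ennreal" where
  "Lq_norm q f = (if q = \<infinity>
      then Inf {C. AE x in lebesgue. ennreal \<bar>f x\<bar> \<le> C}
      else epow (\<integral>\<^sup>+ x. ennreal (\<bar>f x\<bar> powr enn2real q) \<partial>lebesgue) (1 / enn2real q))"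

definition annulus :: "int \<Rightarrow> 'a::euclidean_space set" where
  "annulus j = {x. 2 powr (real_of_int j - 1) \<le> norm x \<and> norm x < 2 powr real_of_int j}"

definition herz_norm :: "real \<Rightarrow> ennreal \<Rightarrow> ennreal \<Rightarrow> ('a::euclidean_space \<Rightarrow> real) \<Rightarrow> ennreal" where
  "herz_norm s q r f =
     (let a = (\<lambda>j::int. ennreal (2 powr (real_of_int j * s)) *
                        Lq_norm q (\<lambda>x. f x * indicator (annulus j) x))
      in if r = \<infinity> then (SUP j. a j)
         else epow (\<integral>\<^sup>+ j. epow (a j) (enn2real r) \<partial>count_space UNIV) (1 / enn2real r))"

text \<open>Decreasing rearrangement f^*(t) = inf{\<lambda> > 0. |{|f| > \<lambda>}| \<le> t} (inf \<emptyset> = \<infinity>).\<close>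
definition rearr :: "('a::euclidean_space \<Rightarrow> real) \<Rightarrow> real \<Rightarrow> ennreal" where
  "rearr f t = Inf {c::ennreal. 0 < c \<and>
       emeasure lebesgue {x. c < ennreal \<bar>f x\<bar>} \<le> ennreal t}"

definition lorentz_norm :: "real \<Rightarrow> ennreal \<Rightarrow> ('a::euclidean_space \<Rightarrow> real) \<Rightarrow> ennreal" where
  "lorentz_norm p r f = (if r = \<infinity>
      then (SUP t\<in>{0<..}. ennreal (t powr (1/p)) * rearr f t)
      else epow (\<integral>\<^sup>+ t\<in>{0<..}. epow (ennreal (t powr (1/p)) * rearr f t) (enn2real r)
                    * ennreal (1 / t) \<partial>lborel) (1 / enn2real r))"

definition wlorentz_norm :: "real \<Rightarrow> ennreal \<Rightarrow> real \<Rightarrow> ('a::euclidean_space \<Rightarrow> real) \<Rightarrow> ennreal" where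
  "wlorentz_norm p r s f = lorentz_norm p r (\<lambda>x. norm x powr s * f x)"

end

(*
  Both quasi-norms are compared through the dyadic samples c_k = d_k^(1/p) g*(d_k) of the
  decreasing rearrangement of g = |x|^s' f, where d_k = 2^(n(k+1)) bounds the volume of the
  ball of radius 2^k.  Since g* is nonincreasing, the Lorentz quasi-norm of g is comparable to
  the l^r norm of (c_k).

  For s < s', a layer-cake decomposition of g on the annulus A_j according to the levels
  g*(d_(j-i-1)) bounds the Herz block 2^(js) ||f 1_(A_j)||_q by sup_i 2^(-i(s'-s)/2) c_(j-i-1).
  For s > s', Chebyshev's inequality on the annuli A_(k+i) outside the ball of radius 2^(k-1)
  bounds c_k by sup_i 2^(-i(s-s')/2) 2^((k+i)s) ||f 1_(A_(k+i))||_q.  In both cases the balance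
  condition s/n + 1/q = s'/n + 1/p makes all powers of 2 cancel except a geometric factor, and
  a discrete Young inequality for geometric kernels on l^r concludes.
*)
theory Submission
  imports Defs
begin

section \<open>Powers and quotients of extended nonnegative reals\<close>

lemma epow_top [simp]: "epow top a = top"
  by (simp add: epow_def)

lemma epow_ennreal: "0 \<le> c \<Longrightarrow> epow (ennreal c) a = ennreal (c powr a)"
  by (simp add: epow_def)

lemma epow_0 [simp]: "epow 0 a = 0"
  by (simp add: epow_def)

lemma epow_mono:
  assumes "0 < a" "x \<le> y"
  shows "epow x a \<le> epow y a"
proof (cases y rule: ennreal_cases)
  case (real v)
  with assms obtain u where "x = ennreal u" "0 \<le> u" "u \<le> v"
    by (cases x rule: ennreal_cases) (auto simp: top_unique)
  with real assms show ?thesis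
    by (simp add: epow_ennreal powr_mono2)
qed simp

lemma epow_mult:
  assumes "0 < a"
  shows "epow (x * y) a = epow x a * epow y a"
proof (cases x rule: ennreal_cases)
  case (real u)
  then show ?thesis
    using assms by (cases y rule: ennreal_cases; cases "u = 0")
      (auto simp: epow_ennreal ennreal_mult[symmetric] powr_mult ennreal_mult_top)
next
  case top
  then show ?thesis
    using assms by (cases y rule: ennreal_cases; cases "y = 0")
      (auto simp: epow_ennreal ennreal_top_mult)
qed

lemma epow_cmult:
  assumes "0 < a" "0 \<le> c"
  shows "epow (ennreal c * x) a = ennreal (c powr a) * epow x a"
  using assms by (simp add: epow_mult epow_ennreal)

lemma epow_epow:
  assumes "0 < a" "0 < b"
  shows "epow (epow x a) b = epow x (a * b)"
  using assms by (cases x rule: ennreal_cases) (auto simp: epow_ennreal powr_powr)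

lemma epow_1 [simp]: "epow x 1 = x"
  by (cases x rule: ennreal_cases) (auto simp: epow_ennreal)

lemma epow_epow_inverse [simp]: "0 < a \<Longrightarrow> epow (epow x a) (1 / a) = x"
  by (simp add: epow_epow)

lemma epow_inverse_epow [simp]: "0 < a \<Longrightarrow> epow (epow x (1 / a)) a = x"
  by (simp add: epow_epow)

lemma ennreal_le_suminf: "(f i :: ennreal) \<le> (\<Sum>i. f i)"
  using sum_le_suminf[OF summableI, of "{i}" f] by simp

lemma ennreal_le_divide_of_mult_le:
  assumes "ennreal c * T \<le> L" "0 < c"
  shows "T \<le> ennreal (1/c) * L"
proof -
  have "T = ennreal (1/c) * (ennreal c * T)"
    using assms by (simp add: mult.assoc[symmetric] ennreal_mult[symmetric])
  also have "\<dots> \<le> ennreal (1/c) * L"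
    using assms by (intro mult_left_mono) simp_all
  finally show ?thesis .
qed

lemma ennreal_le_divide_of_mult_mult_le:
  assumes "ennreal a * (ennreal b * T) \<le> ennreal c" "0 < a" "0 < b" "0 \<le> c"
  shows "T \<le> ennreal (c / (a * b))"
proof -
  have "ennreal (a * b) * T \<le> ennreal c"
    using assms by (simp add: ennreal_mult mult.assoc)
  then have "T \<le> ennreal (1 / (a * b)) * ennreal c"
    using assms by (intro ennreal_le_divide_of_mult_le) auto
  then show ?thesis
    using assms by (simp add: ennreal_mult[symmetric])
qed

lemma enn2real_positive_finite:
  "0 < (x::ennreal) \<Longrightarrow> x \<noteq> \<infinity> \<Longrightarrow> 0 < enn2real x \<and> x = ennreal (enn2real x)"
  by (simp add: enn2real_positive_iff less_top)

lemma recip_ennreal: "0 < x \<Longrightarrow> recip (ennreal x) = 1 / x"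
  by (simp add: recip_def inverse_ennreal divide_inverse)

section \<open>The sequence quasi-norm \<open>\<ell>\<^sup>r(\<int>)\<close>\<close>

definition lr_norm :: "ennreal \<Rightarrow> (int \<Rightarrow> ennreal) \<Rightarrow> ennreal" where
  "lr_norm r a = (if r = \<infinity> then (SUP j. a j)
     else epow (\<integral>\<^sup>+ j. epow (a j) (enn2real r) \<partial>count_space UNIV) (1 / enn2real r))"

lemma herz_norm_eq_lr_norm:
  "herz_norm s q r f = lr_norm r (\<lambda>j. ennreal (2 powr (real_of_int j * s)) *
                        Lq_norm q (\<lambda>x. f x * indicator (annulus j) x))"
  by (simp add: herz_norm_def lr_norm_def Let_def)

lemma le_mult_SUP_of_real_bounds:
  fixes b :: ennreal
  assumes "0 < K" and bound: "\<And>\<delta>. 0 \<le> \<delta> \<Longrightarrow> (\<And>i. c i \<le> ennreal \<delta>) \<Longrightarrow> b \<le> ennreal (K * \<delta>)"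
  shows "b \<le> ennreal K * (SUP i. c i)"
proof (cases "(SUP i. c i)" rule: ennreal_cases)
  case (real \<delta>)
  then have "c i \<le> ennreal \<delta>" for i
    by (metis SUP_upper UNIV_I)
  with real bound assms show ?thesis
    by (simp add: ennreal_mult)
next
  case top
  then show ?thesis
    unfolding top using assms by (simp add: ennreal_mult_top)
qed

lemma nn_integral_geometric_average:
  fixes \<sigma> :: "int \<Rightarrow> nat \<Rightarrow> int" and a :: "int \<Rightarrow> ennreal"
  assumes t: "0 \<le> t" "t < 1" and \<sigma>: "\<And>i. bij (\<lambda>j. \<sigma> j i)"
  shows "(\<integral>\<^sup>+ j. (\<Sum>i. ennreal (t^i) * a (\<sigma> j i)) \<partial>count_space UNIV)
         = ennreal (1 / (1 - t)) * (\<integral>\<^sup>+ j. a j \<partial>count_space UNIV)"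
proof -
  have "(\<integral>\<^sup>+ j. (\<Sum>i. ennreal (t^i) * a (\<sigma> j i)) \<partial>count_space UNIV)
      = (\<Sum>i. \<integral>\<^sup>+ j. ennreal (t^i) * a (\<sigma> j i) \<partial>count_space UNIV)"
    by (rule nn_integral_suminf) simp
  also have "\<dots> = (\<Sum>i. ennreal (t^i) * (\<integral>\<^sup>+ j. a j \<partial>count_space UNIV))"
  proof (rule suminf_cong)
    fix i
    have "(\<integral>\<^sup>+ j. a (\<sigma> j i) \<partial>count_space UNIV) = (\<integral>\<^sup>+ j. a j \<partial>count_space UNIV)"
      by (rule nn_integral_bij_count_space) (use \<sigma> in simp)
    then show "(\<integral>\<^sup>+ j. ennreal (t^i) * a (\<sigma> j i) \<partial>count_space UNIV)
        = ennreal (t^i) * (\<integral>\<^sup>+ j. a j \<partial>count_space UNIV)"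
      by (simp add: nn_integral_cmult)
  qed
  also have "(\<Sum>i. ennreal (t^i)) = ennreal (1 / (1 - t))"
    using t by (subst suminf_ennreal2) (auto simp: suminf_geometric summable_geometric)
  then have "(\<Sum>i. ennreal (t^i) * (\<integral>\<^sup>+ j. a j \<partial>count_space UNIV))
      = ennreal (1 / (1 - t)) * (\<integral>\<^sup>+ j. a j \<partial>count_space UNIV)"
    by simp
  finally show ?thesis .
qed

lemma lr_norm_top_le_geometric_average:
  assumes \<theta>: "0 \<le> \<theta>" "\<theta> \<le> 1"
    and b: "\<And>j. b j \<le> ennreal K * (SUP i. ennreal (\<theta>^i) * c (\<sigma> j i))"
  shows "lr_norm \<infinity> b \<le> ennreal K * lr_norm \<infinity> c"
proof -
  have "ennreal (\<theta>^i) * c k \<le> (SUP k. c k)" for i k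
    using mult_right_mono[of "ennreal (\<theta>^i)" 1 "c k"] \<theta>
    by (simp add: power_le_one) (meson SUP_upper UNIV_I order_trans)
  then have "b j \<le> ennreal K * (SUP k. c k)" for j
    using b by (meson SUP_least mult_left_mono order_trans zero_le)
  then show ?thesis
    by (simp add: lr_norm_def SUP_le_iff)
qed

text \<open>For finite \<open>r\<close> the supremum is dominated by the sum of the \<open>r\<close>-th powers, which
  turns the averaging into a convolution with the summable kernel \<open>\<theta>\<^sup>r\<^sup>i\<close>.\<close>
lemma lr_norm_le_geometric_average_finite:
  fixes \<sigma> :: "int \<Rightarrow> nat \<Rightarrow> int"
  assumes r: "0 < r" "r \<noteq> \<infinity>" and \<theta>: "0 \<le> \<theta>" "\<theta> < 1" and K: "0 \<le> K"
    and \<sigma>: "\<And>i. bij (\<lambda>j. \<sigma> j i)"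
    and b: "\<And>j. b j \<le> ennreal K * (SUP i. ennreal (\<theta>^i) * c (\<sigma> j i))"
  shows "lr_norm r b \<le> ennreal (K * (1 / (1 - \<theta> powr enn2real r)) powr (1 / enn2real r)) * lr_norm r c"
proof -
  define \<rho> where "\<rho> = enn2real r"
  have \<rho>: "0 < \<rho>" using r by (simp add: \<rho>_def enn2real_positive_finite)
  define t where "t = \<theta> powr \<rho>"
  have t: "0 \<le> t" "t < 1" using \<theta> \<rho> powr_less_mono2[of \<rho> \<theta> 1] by (auto simp: t_def)
  define S where "S j = (\<Sum>i. ennreal (t^i) * epow (c (\<sigma> j i)) \<rho>)" for j
  have "epow (b j) \<rho> \<le> ennreal (K powr \<rho>) * S j" for j
  proof -
    have "ennreal (\<theta>^i) * c (\<sigma> j i) \<le> epow (S j) (1/\<rho>)" for i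
    proof -
      have "(\<theta>^i) powr \<rho> = t^i"
        using \<theta> by (induction i) (auto simp: t_def powr_mult)
      then have "epow (ennreal (\<theta>^i) * c (\<sigma> j i)) \<rho> \<le> S j"
        using \<theta> \<rho> ennreal_le_suminf[of "\<lambda>i. ennreal (t^i) * epow (c (\<sigma> j i)) \<rho>" i]
        by (simp add: epow_cmult S_def)
      then show ?thesis
        using \<rho> epow_mono[of "1/\<rho>"] by (metis divide_pos_pos epow_epow_inverse zero_less_one)
    qed
    then have "b j \<le> ennreal K * epow (S j) (1/\<rho>)"
      using b by (meson SUP_least mult_left_mono order_trans zero_le)
    then have "epow (b j) \<rho> \<le> epow (ennreal K * epow (S j) (1/\<rho>)) \<rho>"
      using \<rho> by (rule epow_mono[rotated])
    also have "\<dots> = ennreal (K powr \<rho>) * S j"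
      using \<rho> K by (simp add: epow_cmult)
    finally show ?thesis .
  qed
  then have "(\<integral>\<^sup>+ j. epow (b j) \<rho> \<partial>count_space UNIV)
      \<le> (\<integral>\<^sup>+ j. ennreal (K powr \<rho>) * S j \<partial>count_space UNIV)"
    by (intro nn_integral_mono)
  also have "\<dots> = ennreal (K powr \<rho>) * (ennreal (1 / (1 - t)) * (\<integral>\<^sup>+ j. epow (c j) \<rho> \<partial>count_space UNIV))"
    unfolding S_def
    by (simp add: nn_integral_cmult nn_integral_geometric_average[OF t \<sigma>, of "\<lambda>k. epow (c k) \<rho>"])
  finally have "lr_norm r b
      \<le> epow (ennreal (K powr \<rho>) * (ennreal (1 / (1 - t)) * (\<integral>\<^sup>+ j. epow (c j) \<rho> \<partial>count_space UNIV))) (1/\<rho>)"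
    using r \<rho> by (simp add: lr_norm_def \<rho>_def[symmetric] epow_mono)
  also have "\<dots> = ennreal (K * (1 / (1 - t)) powr (1/\<rho>)) * lr_norm r c"
    using r \<rho> K t by (simp add: lr_norm_def \<rho>_def[symmetric] epow_cmult powr_powr ennreal_mult' mult.assoc)
  finally show ?thesis
    by (simp add: t_def \<rho>_def)
qed

text \<open>A discrete Young inequality for the summable kernel \<open>\<theta>\<^sup>i\<close>.\<close>
lemma lr_norm_le_geometric_average:
  fixes \<sigma> :: "int \<Rightarrow> nat \<Rightarrow> int"
  assumes r: "0 < r" and \<theta>: "0 \<le> \<theta>" "\<theta> < 1" and K: "0 < K"
    and \<sigma>: "\<And>i. bij (\<lambda>j. \<sigma> j i)"
  shows "\<exists>C>0. \<forall>b c. (\<forall>j. b j \<le> ennreal K * (SUP i. ennreal (\<theta>^i) * c (\<sigma> j i)))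
            \<longrightarrow> lr_norm r b \<le> ennreal C * lr_norm r c"
proof (cases "r = \<infinity>")
  case True
  then show ?thesis
    using K \<theta> lr_norm_top_le_geometric_average[of \<theta>] by (intro exI[of _ K]) auto
next
  case False
  have "\<theta> powr enn2real r < 1"
    using \<theta> r False powr_less_mono2[of "enn2real r" \<theta> 1] by (simp add: enn2real_positive_finite)
  show ?thesis
  proof (intro exI[of _ "K * (1 / (1 - \<theta> powr enn2real r)) powr (1 / enn2real r)"] conjI allI impI)
    show "0 < K * (1 / (1 - \<theta> powr enn2real r)) powr (1 / enn2real r)"
      using K \<open>\<theta> powr enn2real r < 1\<close> by simp
    fix b c :: "int \<Rightarrow> ennreal"
    assume "\<forall>j. b j \<le> ennreal K * (SUP i. ennreal (\<theta>^i) * c (\<sigma> j i))"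
    then show "lr_norm r b \<le> ennreal (K * (1 / (1 - \<theta> powr enn2real r)) powr (1 / enn2real r)) * lr_norm r c"
      using K by (intro lr_norm_le_geometric_average_finite[OF r False \<theta> _ \<sigma>]) auto
  qed
qed

section \<open>Dyadic annuli and balls\<close>

lemma annulus_borel [measurable]: "annulus j \<in> sets borel"
  unfolding annulus_def by measurable

lemma annulus_lebesgue [measurable]: "annulus j \<in> sets lebesgue"
  using annulus_borel by (metis sets_completionI_sets sets_lborel)

lemma ball_lebesgue: "{x::'a::euclidean_space. norm x < R} \<in> sets lebesgue"
proof -
  have "{x::'a. norm x < R} = ball 0 R" by (auto simp: mem_ball)
  then show ?thesis by (metis borel_open open_ball sets_completionI_sets sets_lborel)
qed

lemma lebesgue_set_less:
  fixes h :: "'a::euclidean_space \<Rightarrow> 'b::{linorder_topology, second_countable_topology}"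
  assumes [measurable]: "h \<in> borel_measurable lebesgue"
  shows "{x. c < h x} \<in> sets lebesgue"
proof -
  have "{x \<in> space lebesgue. c < h x} \<in> sets lebesgue" by measurable
  then show ?thesis by simp
qed

lemma emeasure_norm_less_le:
  assumes "0 < R"
  shows "emeasure lebesgue {x::'a::euclidean_space. norm x < R} \<le> ennreal ((2*R)^DIM('a))"
proof -
  let ?cube = "cbox (-(R *\<^sub>R One)) (R *\<^sub>R One) :: 'a set"
  have sub: "{x::'a. norm x < R} \<subseteq> ?cube"
  proof
    fix x :: 'a assume "x \<in> {x. norm x < R}"
    then have "\<bar>x \<bullet> b\<bar> \<le> R" if "b \<in> Basis" for b
      using Basis_le_norm[OF that, of x] by simp
    then show "x \<in> ?cube"
      by (force simp: mem_box abs_le_iff inner_minus_left)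
  qed
  have "emeasure lebesgue {x::'a. norm x < R} \<le> emeasure lebesgue ?cube"
    by (intro emeasure_mono sub) simp
  also have "\<dots> = emeasure lborel ?cube"
    by simp
  also have "\<dots> = ennreal ((2*R)^DIM('a))"
  proof -
    have "(\<Prod>b\<in>(Basis::'a set). (R *\<^sub>R One - (-(R *\<^sub>R One))) \<bullet> b) = (\<Prod>b\<in>(Basis::'a set). 2*R)"
      by (rule prod.cong[OF refl]) (auto simp: inner_diff_left inner_add_left)
    then show ?thesis using assms by (simp add: emeasure_lborel_cbox_eq inner_diff_left)
  qed
  finally show ?thesis .
qed

text \<open>\<open>(2\<^sup>k\<^sup>+\<^sup>1)\<^sup>n\<close>, the volume of the cube circumscribing the ball of radius \<open>2\<^sup>k\<close>; these
  are also the nodes at which the Lorentz norm is sampled.\<close>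
definition dyadic_volume :: "nat \<Rightarrow> int \<Rightarrow> real" where
  "dyadic_volume n k = 2 powr (real n * (real_of_int k + 1))"

lemma dyadic_volume_pos: "0 < dyadic_volume n k"
  by (simp add: dyadic_volume_def)

lemma dyadic_volume_mono: "k \<le> l \<Longrightarrow> dyadic_volume n k \<le> dyadic_volume n l"
  by (simp add: dyadic_volume_def mult_left_mono)

lemma dyadic_volume_step: "dyadic_volume n k = 2 powr real n * dyadic_volume n (k - 1)"
  by (simp add: dyadic_volume_def powr_add[symmetric] algebra_simps)

lemma dyadic_volume_eventually_less:
  assumes "0 < n" "0 < e"
  shows "\<exists>i::nat. dyadic_volume n (j - int i) < e"
proof -
  define i where "i = nat (\<lceil>real_of_int j + 1 - log 2 e / real n\<rceil> + 1)"
  have "real_of_int j + 1 - log 2 e / real n < real i"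
    unfolding i_def by linarith
  then have "real n * (real_of_int (j - int i) + 1) < log 2 e"
    using assms by (simp add: field_simps)
  then show ?thesis
    using assms by (auto simp: dyadic_volume_def powr_less_iff)
qed

lemma emeasure_dyadic_ball_le:
  "emeasure lebesgue {x::'a::euclidean_space. norm x < 2 powr real_of_int k} \<le> ennreal (dyadic_volume DIM('a) k)"
proof -
  have "(2 * 2 powr real_of_int k) ^ DIM('a) = dyadic_volume DIM('a) k"
    by (simp add: dyadic_volume_def powr_realpow[symmetric] powr_powr powr_add[symmetric] algebra_simps)
  then show ?thesis using emeasure_norm_less_le[of "2 powr real_of_int k", where 'a='a] by simp
qed

lemma emeasure_annulus_le:
  "emeasure lebesgue (annulus j :: 'a::euclidean_space set) \<le> ennreal (dyadic_volume DIM('a) j)"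
proof -
  have "annulus j \<subseteq> {x::'a. norm x < 2 powr real_of_int j}"
    by (auto simp: annulus_def)
  then show ?thesis
    by (rule order_trans[OF emeasure_mono emeasure_dyadic_ball_le]) (rule ball_lebesgue)
qed

lemma mem_annulus_log:
  assumes "x \<noteq> 0"
  shows "x \<in> annulus (\<lfloor>log 2 (norm x)\<rfloor> + 1)"
proof -
  let ?l = "log 2 (norm x)"
  have "2 powr real_of_int \<lfloor>?l\<rfloor> \<le> 2 powr ?l"
    by simp
  moreover have "2 powr ?l < 2 powr (real_of_int \<lfloor>?l\<rfloor> + 1)"
    by (simp add: real_of_int_floor_add_one_gt)
  moreover have "2 powr ?l = norm x"
    using assms by simp
  ultimately show ?thesis
    unfolding annulus_def by simp
qed

lemma norm_powr_le_on_annulus: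
  assumes "x \<in> annulus j"
  shows "norm x powr a \<le> max 1 (2 powr (-a)) * 2 powr (real_of_int j * a)"
proof (cases "0 \<le> a")
  case True
  have "norm x powr a \<le> (2 powr real_of_int j) powr a"
    using assms True by (intro powr_mono2) (auto simp: annulus_def)
  also have "\<dots> \<le> max 1 (2 powr (-a)) * 2 powr (real_of_int j * a)"
    by (simp add: powr_powr mult_right_mono)
  finally show ?thesis .
next
  case False
  have "norm x powr a \<le> (2 powr (real_of_int j - 1)) powr a"
    using assms False by (intro powr_mono2') (auto simp: annulus_def)
  also have "\<dots> = 2 powr (-a) * 2 powr (real_of_int j * a)"
    by (simp add: powr_powr powr_add[symmetric] algebra_simps)
  also have "\<dots> \<le> max 1 (2 powr (-a)) * 2 powr (real_of_int j * a)"
    by (simp add: mult_right_mono)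
  finally show ?thesis .
qed

lemma borel_measurable_norm_powr [measurable]:
  "(\<lambda>x::'a::euclidean_space. norm x powr a) \<in> borel_measurable lebesgue"
  by (rule measurable_completion) measurable

section \<open>Decreasing rearrangement\<close>

lemma rearr_antimono:
  assumes "t1 \<le> t2"
  shows "rearr g t2 \<le> rearr g t1"
  unfolding rearr_def
proof (rule Inf_superset_mono, safe)
  fix c assume "emeasure lebesgue {x. c < ennreal \<bar>g x\<bar>} \<le> ennreal t1"
  then show "emeasure lebesgue {x. c < ennreal \<bar>g x\<bar>} \<le> ennreal t2"
    using assms by (meson ennreal_leI order_trans)
qed

lemma rearr_le_of_level_sets:
  assumes "0 \<le> lam"
    and level: "\<And>l. lam < l \<Longrightarrow> emeasure lebesgue {x. l < \<bar>g x\<bar>} \<le> ennreal t"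
  shows "rearr g t \<le> ennreal lam"
proof (rule ennreal_le_epsilon)
  fix e :: real assume "0 < e"
  have "{x. ennreal (lam + e) < ennreal \<bar>g x\<bar>} = {x. lam + e < \<bar>g x\<bar>}"
    using assms \<open>0 < e\<close> by (auto simp del: ennreal_plus simp: ennreal_less_iff)
  then have "emeasure lebesgue {x. ennreal (lam + e) < ennreal \<bar>g x\<bar>} \<le> ennreal t"
    using level[of "lam + e"] \<open>0 < e\<close> by simp
  then have "rearr g t \<le> ennreal (lam + e)"
    unfolding rearr_def using assms \<open>0 < e\<close> by (intro Inf_lower) (simp del: ennreal_plus)
  then show "rearr g t \<le> ennreal lam + ennreal e"
    using assms \<open>0 < e\<close> by simp
qed

lemma emeasure_rearr_level_le:
  assumes g [measurable]: "g \<in> borel_measurable lebesgue"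
  shows "emeasure lebesgue {x. rearr g t < ennreal \<bar>g x\<bar>} \<le> ennreal t"
proof (cases "rearr g t" rule: ennreal_cases)
  case (real \<gamma>)
  define B where "B n = {x. \<gamma> + 1 / Suc n < \<bar>g x\<bar>}" for n :: nat
  have B_lebesgue: "range B \<subseteq> sets lebesgue"
    unfolding B_def using lebesgue_set_less[of "\<lambda>x. \<bar>g x\<bar>"] by auto
  have "incseq B"
  proof (rule incseq_SucI)
    fix n
    have "1 / real (Suc (Suc n)) \<le> 1 / Suc n" by (simp add: frac_le)
    then show "B n \<subseteq> B (Suc n)" unfolding B_def by force
  qed
  have B_le: "emeasure lebesgue (B n) \<le> ennreal t" for n
  proof -
    have "rearr g t < ennreal (\<gamma> + 1 / Suc n)"
      using real by (simp add: ennreal_lessI add_nonneg_pos)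
    then obtain c where c: "0 < c" "emeasure lebesgue {x. c < ennreal \<bar>g x\<bar>} \<le> ennreal t"
      "c < ennreal (\<gamma> + 1 / Suc n)"
      unfolding rearr_def Inf_less_iff by blast
    have "B n \<subseteq> {x. c < ennreal \<bar>g x\<bar>}"
      using c(3) real
      by (auto simp del: ennreal_plus simp: B_def ennreal_less_iff intro: order.strict_trans)
    then have "emeasure lebesgue (B n) \<le> emeasure lebesgue {x. c < ennreal \<bar>g x\<bar>}"
      by (intro emeasure_mono lebesgue_set_less) measurable
    then show ?thesis using c(2) by (blast intro: order_trans)
  qed
  have "{x. rearr g t < ennreal \<bar>g x\<bar>} = (\<Union>n. B n)"
  proof safe
    fix x assume "rearr g t < ennreal \<bar>g x\<bar>"
    then have "0 < \<bar>g x\<bar> - \<gamma>" using real by (simp add: ennreal_less_iff)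
    from reals_Archimedean[OF this] obtain n where "inverse (real (Suc n)) < \<bar>g x\<bar> - \<gamma>" by blast
    then have "\<gamma> + 1 / Suc n < \<bar>g x\<bar>" by (simp add: inverse_eq_divide)
    then show "x \<in> (\<Union>n. B n)" by (auto simp: B_def)
  next
    fix x n assume "x \<in> B n"
    moreover have "0 < 1 / real (Suc n)"
      by simp
    ultimately have "\<gamma> < \<bar>g x\<bar>"
      unfolding B_def mem_Collect_eq by linarith
    then show "rearr g t < ennreal \<bar>g x\<bar>"
      using real by (simp add: ennreal_lessI)
  qed
  moreover have "emeasure lebesgue (\<Union>n. B n) \<le> ennreal t"
    unfolding SUP_emeasure_incseq[OF B_lebesgue \<open>incseq B\<close>, symmetric] by (rule SUP_least) (rule B_le)
  ultimately show ?thesis by simp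
qed simp

lemma null_sets_rearr_exceeds_all:
  fixes g :: "'a::euclidean_space \<Rightarrow> real"
  assumes g [measurable]: "g \<in> borel_measurable lebesgue"
    and t: "\<And>e. 0 < e \<Longrightarrow> \<exists>i. t i < e"
  shows "{x. \<forall>i::nat. rearr g (t i) < ennreal \<bar>g x\<bar>} \<in> null_sets lebesgue"
proof -
  let ?N = "{x. \<forall>i::nat. rearr g (t i) < ennreal \<bar>g x\<bar>}"
  have level: "{x. rearr g (t i) < ennreal \<bar>g x\<bar>} \<in> sets lebesgue" for i
    by (rule lebesgue_set_less) measurable
  have "?N = (\<Inter>i. {x. rearr g (t i) < ennreal \<bar>g x\<bar>})"
    by auto
  then have N: "?N \<in> sets lebesgue"
    using level by (simp add: sets.countable_INT')
  have N_le: "emeasure lebesgue ?N \<le> ennreal (t i)" for i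
    by (rule order_trans[OF emeasure_mono emeasure_rearr_level_le[OF g]]) (auto simp: level)
  have "emeasure lebesgue ?N \<le> 0"
  proof (rule ennreal_le_epsilon)
    fix e :: real assume "0 < e"
    with t obtain i where "t i < e" by blast
    then show "emeasure lebesgue ?N \<le> 0 + ennreal e"
      using N_le[of i] by (simp add: order_trans[OF _ ennreal_leI])
  qed
  then show ?thesis
    using N by (simp add: null_sets_def)
qed

text \<open>Layer-cake bound: almost every \<open>x\<close> has a first index \<open>i\<close> with \<open>\<bar>g x\<bar> \<le> g\<^sup>*(t\<^sub>i) \<le> lam\<^sub>i\<close>,
  and for \<open>i > 0\<close> it then lies in \<open>{\<bar>g\<bar> > g\<^sup>*(t\<^sub>i\<^sub>-\<^sub>1)}\<close>, a set of measure at most \<open>t\<^sub>i\<^sub>-\<^sub>1\<close>.\<close>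
lemma nn_integral_powr_le_rearr_layers:
  fixes g :: "'a::euclidean_space \<Rightarrow> real" and t lam :: "nat \<Rightarrow> real" and m :: "nat \<Rightarrow> ennreal"
  assumes g [measurable]: "g \<in> borel_measurable lebesgue" and A [measurable]: "A \<in> sets lebesgue"
    and q: "0 < q" and t: "\<And>e. 0 < e \<Longrightarrow> \<exists>i. t i < e"
    and lam: "\<And>i. 0 \<le> lam i" "\<And>i. rearr g (t i) \<le> ennreal (lam i)"
    and m: "emeasure lebesgue A \<le> m 0" "\<And>i. ennreal (t i) \<le> m (Suc i)"
  shows "(\<integral>\<^sup>+x. ennreal (\<bar>g x\<bar> powr q) * indicator A x \<partial>lebesgue) \<le> (\<Sum>i. ennreal (lam i powr q) * m i)"
proof -
  define S where "S i = A \<inter> (if i = 0 then UNIV else {x. rearr g (t (i - 1)) < ennreal \<bar>g x\<bar>})" for i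
  have S: "S i \<in> sets lebesgue" for i
    using lebesgue_set_less[of "\<lambda>x. ennreal \<bar>g x\<bar>"] by (auto simp: S_def)
  have S_le: "emeasure lebesgue (S i) \<le> m i" for i
  proof (cases i)
    case 0
    then show ?thesis using m(1) by (simp add: S_def)
  next
    case (Suc k)
    have "emeasure lebesgue (S i) \<le> emeasure lebesgue {x. rearr g (t k) < ennreal \<bar>g x\<bar>}"
      using Suc lebesgue_set_less[of "\<lambda>x. ennreal \<bar>g x\<bar>"] by (intro emeasure_mono) (auto simp: S_def)
    also have "\<dots> \<le> m i"
      using emeasure_rearr_level_le[OF g] m(2) Suc by (blast intro: order_trans)
    finally show ?thesis .
  qed
  have pointwise: "AE x in lebesgue.
      ennreal (\<bar>g x\<bar> powr q) * indicator A x \<le> (\<Sum>i. ennreal (lam i powr q) * indicator (S i) x)"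
  proof (rule AE_I'[OF null_sets_rearr_exceeds_all[OF g t]], safe, rule ccontr)
    fix x i
    assume not_bounded: "\<not> ennreal (\<bar>g x\<bar> powr q) * indicator A x
        \<le> (\<Sum>i. ennreal (lam i powr q) * indicator (S i) x)"
      and "\<not> rearr g (t i) < ennreal \<bar>g x\<bar>"
    define i0 where "i0 = (LEAST i. \<not> rearr g (t i) < ennreal \<bar>g x\<bar>)"
    have i0: "\<not> rearr g (t i0) < ennreal \<bar>g x\<bar>"
      unfolding i0_def by (rule LeastI) fact
    have "x \<in> S i0" if "x \<in> A"
    proof (cases i0)
      case (Suc k)
      then have "rearr g (t k) < ennreal \<bar>g x\<bar>"
        using not_less_Least[of k "\<lambda>i. \<not> rearr g (t i) < ennreal \<bar>g x\<bar>"] by (auto simp: i0_def)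
      then show ?thesis using that Suc by (simp add: S_def)
    qed (use that in \<open>simp add: S_def\<close>)
    moreover have "\<bar>g x\<bar> \<le> lam i0"
      using i0 lam[of i0] by (simp add: not_less) (meson ennreal_le_iff order_trans)
    ultimately have "ennreal (\<bar>g x\<bar> powr q) * indicator A x \<le> ennreal (lam i0 powr q) * indicator (S i0) x"
      using q by (auto intro!: ennreal_leI powr_mono2 split: split_indicator)
    also have "\<dots> \<le> (\<Sum>i. ennreal (lam i powr q) * indicator (S i) x)"
      by (rule ennreal_le_suminf)
    finally show False
      using not_bounded by simp
  qed
  have "(\<integral>\<^sup>+x. ennreal (\<bar>g x\<bar> powr q) * indicator A x \<partial>lebesgue)
      \<le> (\<integral>\<^sup>+x. (\<Sum>i. ennreal (lam i powr q) * indicator (S i) x) \<partial>lebesgue)"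
    by (rule nn_integral_mono_AE[OF pointwise])
  also have "\<dots> = (\<Sum>i. ennreal (lam i powr q) * emeasure lebesgue (S i))"
    using S by (subst nn_integral_suminf) (auto simp: nn_integral_cmult_indicator)
  also have "\<dots> \<le> (\<Sum>i. ennreal (lam i powr q) * m i)"
    by (intro suminf_le summableI mult_left_mono S_le) auto
  finally show ?thesis .
qed

section \<open>Discretisation of the Lorentz quasi-norm\<close>

definition dyadic_index :: "nat \<Rightarrow> real \<Rightarrow> int" where
  "dyadic_index n t = \<lceil>log 2 t / real n\<rceil> - 1"

lemma mem_dyadic_interval_iff:
  assumes "0 < n"
  shows "t \<in> {dyadic_volume n (k-1)<..dyadic_volume n k} \<longleftrightarrow> 0 < t \<and> k = dyadic_index n t"
proof (cases "0 < t")
  case False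
  then show ?thesis using dyadic_volume_pos[of n "k-1"] by auto
next
  case True
  have a: "dyadic_volume n (k-1) < t \<longleftrightarrow> real n * real_of_int k < log 2 t"
    using True by (simp add: dyadic_volume_def powr_less_iff)
  have b: "t \<le> dyadic_volume n k \<longleftrightarrow> log 2 t \<le> real n * (real_of_int k + 1)"
    using True by (simp add: dyadic_volume_def le_powr_iff)
  have c: "k = dyadic_index n t \<longleftrightarrow>
      real_of_int k < log 2 t / real n \<and> log 2 t / real n \<le> real_of_int k + 1"
    unfolding dyadic_index_def using ceiling_eq_iff[of "log 2 t / real n" "k+1"] by auto
  show ?thesis using True assms
    by (simp only: greaterThanAtMost_iff a b c) (simp add: field_simps mult.commute)
qed

lemma nn_integral_dyadic_step_function:
  assumes "0 < n"
  shows "(\<integral>\<^sup>+t\<in>{0<..}. w (dyadic_index n t) \<partial>lborel)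
         = (\<integral>\<^sup>+k. w k * ennreal (dyadic_volume n k - dyadic_volume n (k-1)) \<partial>count_space UNIV)"
proof -
  let ?I = "\<lambda>k. {dyadic_volume n (k-1)<..dyadic_volume n k}"
  have "w (dyadic_index n t) * indicator {0<..} t
      = (\<integral>\<^sup>+k. w k * indicator (?I k) t \<partial>count_space UNIV)" for t
  proof -
    have "(\<lambda>k. w k * indicator (?I k) t)
        = (\<lambda>k. (w (dyadic_index n t) * indicator {0<..} t) * indicator {dyadic_index n t} k)"
      using mem_dyadic_interval_iff[OF assms] by (auto simp: fun_eq_iff split: split_indicator)
    then show ?thesis by simp
  qed
  then have "(\<integral>\<^sup>+t\<in>{0<..}. w (dyadic_index n t) \<partial>lborel)
      = (\<integral>\<^sup>+t. (\<integral>\<^sup>+k. w k * indicator (?I k) t \<partial>count_space UNIV) \<partial>lborel)"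
    by simp
  also have "\<dots> = (\<integral>\<^sup>+k. (\<integral>\<^sup>+t. w k * indicator (?I k) t \<partial>lborel) \<partial>count_space UNIV)"
    by (rule nn_integral_count_space_nn_integral) auto
  also have "\<dots> = (\<integral>\<^sup>+k. w k * ennreal (dyadic_volume n k - dyadic_volume n (k-1)) \<partial>count_space UNIV)"
    using dyadic_volume_mono[of "k-1" k n for k]
    by (intro nn_integral_cong) (simp add: nn_integral_cmult_indicator)
  finally show ?thesis .
qed

lemma dyadic_steps_le_nn_integral:
  assumes "0 < n" "\<And>k t. t \<in> {dyadic_volume n (k-1)<..dyadic_volume n k} \<Longrightarrow> w k \<le> F t"
  shows "(\<integral>\<^sup>+k. w k * ennreal (dyadic_volume n k - dyadic_volume n (k-1)) \<partial>count_space UNIV)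
         \<le> (\<integral>\<^sup>+t\<in>{0<..}. F t \<partial>lborel)"
  unfolding nn_integral_dyadic_step_function[OF assms(1), symmetric]
  using assms mem_dyadic_interval_iff[OF assms(1)]
  by (intro nn_integral_mono) (auto split: split_indicator)

lemma nn_integral_le_dyadic_steps:
  assumes "0 < n" "\<And>k t. t \<in> {dyadic_volume n (k-1)<..dyadic_volume n k} \<Longrightarrow> F t \<le> w k"
  shows "(\<integral>\<^sup>+t\<in>{0<..}. F t \<partial>lborel)
         \<le> (\<integral>\<^sup>+k. w k * ennreal (dyadic_volume n k - dyadic_volume n (k-1)) \<partial>count_space UNIV)"
  unfolding nn_integral_dyadic_step_function[OF assms(1), symmetric]
  using assms mem_dyadic_interval_iff[OF assms(1)]
  by (intro nn_integral_mono) (auto split: split_indicator)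

definition lorentz_sample :: "real \<Rightarrow> nat \<Rightarrow> ('a::euclidean_space \<Rightarrow> real) \<Rightarrow> int \<Rightarrow> ennreal" where
  "lorentz_sample p n g k = ennreal (dyadic_volume n k powr (1/p)) * rearr g (dyadic_volume n k)"

lemma epow_lorentz_integrand:
  assumes "0 < \<rho>" "0 \<le> t"
  shows "epow (ennreal (t powr (1/p)) * G) \<rho> = ennreal (t powr (\<rho>/p)) * epow G \<rho>"
  using assms by (simp add: epow_cmult powr_powr)

lemma lorentz_integrand_ge_sample:
  assumes "0 < p" "0 < \<rho>" and t: "t \<in> {dyadic_volume n (k-1)<..dyadic_volume n k}"
  shows "ennreal ((2 powr n) powr (-\<rho>/p) / dyadic_volume n k) * epow (lorentz_sample p n g k) \<rho>
         \<le> epow (ennreal (t powr (1/p)) * rearr g t) \<rho> * ennreal (1/t)"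
proof -
  let ?d = "dyadic_volume n"
  have d: "0 < ?d (k-1)" "0 < ?d k" by (simp_all add: dyadic_volume_pos)
  have "(2 powr n) powr (-\<rho>/p) / ?d k * ?d k powr (\<rho>/p) = ?d (k-1) powr (\<rho>/p) * (1 / ?d k)"
    using dyadic_volume_step[of n k] d by (simp add: powr_mult powr_minus divide_simps)
  also have "\<dots> \<le> t powr (\<rho>/p) * (1/t)"
    using assms d by (intro mult_mono powr_mono2 divide_left_mono) auto
  finally have weight: "(2 powr n) powr (-\<rho>/p) / ?d k * ?d k powr (\<rho>/p) \<le> t powr (\<rho>/p) * (1/t)" .
  have "ennreal ((2 powr n) powr (-\<rho>/p) / ?d k) * epow (lorentz_sample p n g k) \<rho>
      = ennreal ((2 powr n) powr (-\<rho>/p) / ?d k * ?d k powr (\<rho>/p)) * epow (rearr g (?d k)) \<rho>"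
    unfolding lorentz_sample_def epow_lorentz_integrand[OF \<open>0 < \<rho>\<close> less_imp_le[OF d(2)]]
    using d by (subst ennreal_mult) (auto simp: mult.assoc)
  also have "\<dots> \<le> ennreal (t powr (\<rho>/p) * (1/t)) * epow (rearr g t) \<rho>"
    using assms by (intro mult_mono ennreal_leI[OF weight] epow_mono rearr_antimono) auto
  also have "\<dots> = epow (ennreal (t powr (1/p)) * rearr g t) \<rho> * ennreal (1/t)"
    using t d by (subst epow_lorentz_integrand[OF \<open>0 < \<rho>\<close>], simp, subst ennreal_mult) (auto simp: mult_ac)
  finally show ?thesis .
qed

lemma lorentz_integrand_le_sample:
  assumes "0 < p" "0 < \<rho>" and t: "t \<in> {dyadic_volume n (k-1)<..dyadic_volume n k}"
  shows "epow (ennreal (t powr (1/p)) * rearr g t) \<rho> * ennreal (1/t)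
         \<le> ennreal ((2 powr n) powr (\<rho>/p) / dyadic_volume n (k-1)) * epow (lorentz_sample p n g (k-1)) \<rho>"
proof -
  let ?d = "dyadic_volume n"
  have d: "0 < ?d (k-1)" "0 < ?d k" by (simp_all add: dyadic_volume_pos)
  have "t powr (\<rho>/p) * (1/t) \<le> ?d k powr (\<rho>/p) * (1 / ?d (k-1))"
    using assms d by (intro mult_mono powr_mono2 divide_left_mono) auto
  also have "\<dots> = (2 powr n) powr (\<rho>/p) / ?d (k-1) * ?d (k-1) powr (\<rho>/p)"
    using dyadic_volume_step[of n k] d by (simp add: powr_mult)
  finally have weight: "t powr (\<rho>/p) * (1/t) \<le> (2 powr n) powr (\<rho>/p) / ?d (k-1) * ?d (k-1) powr (\<rho>/p)" .
  have "epow (ennreal (t powr (1/p)) * rearr g t) \<rho> * ennreal (1/t)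
      = ennreal (t powr (\<rho>/p) * (1/t)) * epow (rearr g t) \<rho>"
    using t d by (subst epow_lorentz_integrand[OF \<open>0 < \<rho>\<close>], simp, subst ennreal_mult) (auto simp: mult_ac)
  also have "\<dots> \<le> ennreal ((2 powr n) powr (\<rho>/p) / ?d (k-1) * ?d (k-1) powr (\<rho>/p)) * epow (rearr g (?d (k-1))) \<rho>"
    using assms by (intro mult_mono ennreal_leI[OF weight] epow_mono rearr_antimono) auto
  also have "\<dots> = ennreal ((2 powr n) powr (\<rho>/p) / ?d (k-1)) * epow (lorentz_sample p n g (k-1)) \<rho>"
    unfolding lorentz_sample_def epow_lorentz_integrand[OF \<open>0 < \<rho>\<close> less_imp_le[OF d(1)]]
    using d by (subst ennreal_mult) (auto simp: mult.assoc)
  finally show ?thesis .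
qed

lemma lorentz_samples_le_integral:
  assumes "0 < n" "0 < p" "0 < \<rho>"
  shows "ennreal ((2 powr n) powr (-\<rho>/p) * (1 - 1 / 2 powr n))
           * (\<integral>\<^sup>+k. epow (lorentz_sample p n g k) \<rho> \<partial>count_space UNIV)
         \<le> (\<integral>\<^sup>+t\<in>{0<..}. epow (ennreal (t powr (1/p)) * rearr g t) \<rho> * ennreal (1/t) \<partial>lborel)"
proof -
  let ?d = "dyadic_volume n" and ?c = "(2 powr n) powr (-\<rho>/p) * (1 - 1 / 2 powr n)"
  have len: "ennreal ((2 powr n) powr (-\<rho>/p) / ?d k) * ennreal (?d k - ?d (k-1)) = ennreal ?c" for k
  proof -
    have "ennreal ((2 powr n) powr (-\<rho>/p) / ?d k) * ennreal (?d k - ?d (k-1))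
        = ennreal ((2 powr n) powr (-\<rho>/p) / ?d k * (?d k - ?d (k-1)))"
      by (rule ennreal_mult''[symmetric]) (simp add: dyadic_volume_mono)
    also have "(2 powr n) powr (-\<rho>/p) / ?d k * (?d k - ?d (k-1)) = ?c"
      using dyadic_volume_step[of n k] dyadic_volume_pos[of n "k-1"] by (simp add: field_simps)
    finally show ?thesis .
  qed
  have "ennreal ?c * (\<integral>\<^sup>+k. epow (lorentz_sample p n g k) \<rho> \<partial>count_space UNIV)
      = (\<integral>\<^sup>+k. ennreal ?c * epow (lorentz_sample p n g k) \<rho> \<partial>count_space UNIV)"
    by (simp add: nn_integral_cmult)
  also have "\<dots> = (\<integral>\<^sup>+k. (ennreal ((2 powr n) powr (-\<rho>/p) / ?d k) * epow (lorentz_sample p n g k) \<rho>)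
            * ennreal (?d k - ?d (k-1)) \<partial>count_space UNIV)"
    by (intro nn_integral_cong) (subst len[symmetric], simp only: ac_simps)
  also have "\<dots> \<le> (\<integral>\<^sup>+t\<in>{0<..}. epow (ennreal (t powr (1/p)) * rearr g t) \<rho> * ennreal (1/t) \<partial>lborel)"
    using assms by (intro dyadic_steps_le_nn_integral lorentz_integrand_ge_sample)
  finally show ?thesis .
qed

lemma integral_le_lorentz_samples:
  assumes "0 < n" "0 < p" "0 < \<rho>"
  shows "(\<integral>\<^sup>+t\<in>{0<..}. epow (ennreal (t powr (1/p)) * rearr g t) \<rho> * ennreal (1/t) \<partial>lborel)
         \<le> ennreal ((2 powr n) powr (\<rho>/p) * (2 powr n - 1))
           * (\<integral>\<^sup>+k. epow (lorentz_sample p n g k) \<rho> \<partial>count_space UNIV)"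
proof -
  let ?d = "dyadic_volume n" and ?c = "(2 powr n) powr (\<rho>/p) * (2 powr n - 1)"
  have len: "ennreal ((2 powr n) powr (\<rho>/p) / ?d (k-1)) * ennreal (?d k - ?d (k-1)) = ennreal ?c" for k
  proof -
    have "ennreal ((2 powr n) powr (\<rho>/p) / ?d (k-1)) * ennreal (?d k - ?d (k-1))
        = ennreal ((2 powr n) powr (\<rho>/p) / ?d (k-1) * (?d k - ?d (k-1)))"
      by (rule ennreal_mult''[symmetric]) (simp add: dyadic_volume_mono)
    also have "(2 powr n) powr (\<rho>/p) / ?d (k-1) * (?d k - ?d (k-1)) = ?c"
      using dyadic_volume_step[of n k] dyadic_volume_pos[of n "k-1"] by (simp add: field_simps)
    finally show ?thesis .
  qed
  have "(\<integral>\<^sup>+t\<in>{0<..}. epow (ennreal (t powr (1/p)) * rearr g t) \<rho> * ennreal (1/t) \<partial>lborel)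
      \<le> (\<integral>\<^sup>+k. (ennreal ((2 powr n) powr (\<rho>/p) / ?d (k-1)) * epow (lorentz_sample p n g (k-1)) \<rho>)
            * ennreal (?d k - ?d (k-1)) \<partial>count_space UNIV)"
    using assms by (intro nn_integral_le_dyadic_steps lorentz_integrand_le_sample)
  also have "\<dots> = (\<integral>\<^sup>+k. ennreal ?c * epow (lorentz_sample p n g (k-1)) \<rho> \<partial>count_space UNIV)"
    by (intro nn_integral_cong) (subst len[symmetric], simp only: ac_simps)
  also have "\<dots> = ennreal ?c * (\<integral>\<^sup>+k. epow (lorentz_sample p n g (k-1)) \<rho> \<partial>count_space UNIV)"
    by (simp add: nn_integral_cmult)
  also have "(\<integral>\<^sup>+k. epow (lorentz_sample p n g (k-1)) \<rho> \<partial>count_space UNIV)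
      = (\<integral>\<^sup>+k. epow (lorentz_sample p n g k) \<rho> \<partial>count_space UNIV)"
    by (rule nn_integral_bij_count_space[where g="\<lambda>k. k - 1"])
      (auto simp: bij_betw_def inj_on_def image_iff intro!: exI[of _ "x + 1" for x])
  finally show ?thesis .
qed

lemma lr_norm_lorentz_samples_le:
  assumes "0 < n" "0 < p" "0 < r"
  shows "\<exists>C>0. \<forall>g::'a::euclidean_space \<Rightarrow> real. lr_norm r (lorentz_sample p n g) \<le> ennreal C * lorentz_norm p r g"
proof (cases "r = \<infinity>")
  case True
  have "lorentz_sample p n g k \<le> lorentz_norm p r g" for g :: "'a \<Rightarrow> real" and k
    using True dyadic_volume_pos[of n k] unfolding lorentz_norm_def lorentz_sample_def
    by (auto intro!: SUP_upper)
  then show ?thesis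
    using True by (intro exI[of _ 1]) (simp add: lr_norm_def SUP_le_iff)
next
  case False
  define \<rho> where "\<rho> = enn2real r"
  have \<rho>: "0 < \<rho>" using assms False by (simp add: \<rho>_def enn2real_positive_finite)
  define c where "c = (2 powr n) powr (-\<rho>/p) * (1 - 1 / 2 powr n)"
  have c: "0 < c" using assms by (simp add: c_def)
  have "lr_norm r (lorentz_sample p n g) \<le> ennreal ((1/c) powr (1/\<rho>)) * lorentz_norm p r g"
    for g :: "'a \<Rightarrow> real"
  proof -
    have "(\<integral>\<^sup>+k. epow (lorentz_sample p n g k) \<rho> \<partial>count_space UNIV)
        \<le> ennreal (1/c) * (\<integral>\<^sup>+t\<in>{0<..}. epow (ennreal (t powr (1/p)) * rearr g t) \<rho> * ennreal (1/t) \<partial>lborel)"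
      using lorentz_samples_le_integral[OF assms(1,2) \<rho>, of g] c
      unfolding c_def[symmetric] by (rule ennreal_le_divide_of_mult_le)
    then show ?thesis
      using False \<rho> c by (simp add: lr_norm_def lorentz_norm_def \<rho>_def[symmetric] epow_mono epow_cmult
          flip: epow_cmult)
  qed
  then show ?thesis
    using c by (intro exI[of _ "(1/c) powr (1/\<rho>)"]) auto
qed

lemma lorentz_norm_le_lr_norm_samples:
  assumes "0 < n" "0 < p" "0 < r"
  shows "\<exists>C>0. \<forall>g::'a::euclidean_space \<Rightarrow> real. lorentz_norm p r g \<le> ennreal C * lr_norm r (lorentz_sample p n g)"
proof (cases "r = \<infinity>")
  case True
  let ?N = "(2 powr n) powr (1/p)"
  have "ennreal (t powr (1/p)) * rearr g t \<le> ennreal ?N * lr_norm r (lorentz_sample p n g)"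
    if "0 < t" for g :: "'a \<Rightarrow> real" and t
  proof -
    let ?k = "dyadic_index n t" and ?d = "dyadic_volume n"
    have t: "?d (?k - 1) < t" "t \<le> ?d ?k"
      using mem_dyadic_interval_iff[OF assms(1), of t ?k] that by auto
    have "ennreal (t powr (1/p)) * rearr g t \<le> ennreal (?d ?k powr (1/p)) * rearr g (?d (?k - 1))"
      using t assms dyadic_volume_pos[of n "?k - 1"]
      by (intro mult_mono ennreal_leI powr_mono2 rearr_antimono) auto
    also have "\<dots> = ennreal ?N * lorentz_sample p n g (?k - 1)"
      using dyadic_volume_step[of n ?k] dyadic_volume_pos[of n "?k - 1"]
      by (simp add: lorentz_sample_def powr_mult ennreal_mult mult.assoc)
    also have "\<dots> \<le> ennreal ?N * lr_norm r (lorentz_sample p n g)"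
      using True by (intro mult_left_mono) (auto simp: lr_norm_def intro!: SUP_upper)
    finally show ?thesis .
  qed
  then show ?thesis
    using True by (intro exI[of _ ?N]) (auto simp: lorentz_norm_def intro!: SUP_least)
next
  case False
  define \<rho> where "\<rho> = enn2real r"
  have \<rho>: "0 < \<rho>" using assms False by (simp add: \<rho>_def enn2real_positive_finite)
  define c where "c = (2 powr n) powr (\<rho>/p) * (2 powr n - 1)"
  have c: "0 < c" using assms by (simp add: c_def)
  have "lorentz_norm p r g \<le> ennreal (c powr (1/\<rho>)) * lr_norm r (lorentz_sample p n g)"
    for g :: "'a \<Rightarrow> real"
    using False \<rho> c integral_le_lorentz_samples[OF assms(1,2) \<rho>, of g]
    by (simp add: lr_norm_def lorentz_norm_def \<rho>_def[symmetric] c_def epow_mono flip: epow_cmult)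
  then show ?thesis
    using c by (intro exI[of _ "c powr (1/\<rho>)"]) auto
qed

section \<open>Herz blocks bounded by Lorentz samples\<close>

lemma nn_integral_annulus_weight_le:
  fixes h :: "'a::euclidean_space \<Rightarrow> real"
  assumes "0 < q" and [measurable]: "h \<in> borel_measurable lebesgue"
  shows "(\<integral>\<^sup>+x. ennreal (\<bar>norm x powr a * h x\<bar> powr q) * indicator (annulus j) x \<partial>lebesgue)
    \<le> ennreal ((max 1 (2 powr (-a)) * 2 powr (real_of_int j * a)) powr q)
        * (\<integral>\<^sup>+x. ennreal (\<bar>h x\<bar> powr q) * indicator (annulus j) x \<partial>lebesgue)"
proof -
  let ?M = "max 1 (2 powr (-a)) * 2 powr (real_of_int j * a)"
  have "ennreal (\<bar>norm x powr a * h x\<bar> powr q) * indicator (annulus j) x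
      \<le> ennreal (?M powr q) * (ennreal (\<bar>h x\<bar> powr q) * indicator (annulus j) x)" for x
  proof (cases "x \<in> annulus j")
    case True
    have "\<bar>norm x powr a * h x\<bar> powr q \<le> (?M * \<bar>h x\<bar>) powr q"
      using assms norm_powr_le_on_annulus[OF True, of a]
      by (intro powr_mono2) (auto simp: abs_mult intro: mult_right_mono)
    then show ?thesis
      using True by (simp add: powr_mult ennreal_mult[symmetric] ennreal_leI)
  qed simp
  then have "(\<integral>\<^sup>+x. ennreal (\<bar>norm x powr a * h x\<bar> powr q) * indicator (annulus j) x \<partial>lebesgue)
      \<le> (\<integral>\<^sup>+x. ennreal (?M powr q) * (ennreal (\<bar>h x\<bar> powr q) * indicator (annulus j) x) \<partial>lebesgue)"
    by (intro nn_integral_mono)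
  then show ?thesis
    by (subst (asm) nn_integral_cmult) auto
qed

lemma nn_integral_annulus_le_lorentz_samples:
  fixes g :: "'a::euclidean_space \<Rightarrow> real"
  assumes g [measurable]: "g \<in> borel_measurable lebesgue"
    and p: "0 < p" and q: "0 < q" and ss: "s < s'"
    and bal: "s' - s = real DIM('a) * (1/q - 1/p)" and \<delta>: "0 \<le> \<delta>"
    and samples: "\<And>i::nat. ennreal ((2 powr ((s - s')/2))^i) * lorentz_sample p DIM('a) g (j - int i - 1)
                     \<le> ennreal \<delta>"
  shows "(\<integral>\<^sup>+x. ennreal (\<bar>g x\<bar> powr q) * indicator (annulus j) x \<partial>lebesgue)
         \<le> ennreal (\<delta> powr q * 2 powr (real DIM('a) + q * (s' - s) * real_of_int j)
                      / (1 - 2 powr (- q * (s' - s) / 2)))"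
proof -
  define n where "n = DIM('a)"
  have n: "0 < n" by (simp add: n_def)
  define \<beta> where "\<beta> = q * (s' - s)"
  have \<beta>: "0 < \<beta>" using ss q by (simp add: \<beta>_def)
  define \<rho> where "\<rho> = (2::real) powr (- \<beta> / 2)"
  have \<rho>: "0 < \<rho>" "\<rho> < 1" using \<beta> by (auto simp: \<rho>_def intro!: powr_less_one)
  define t where "t i = dyadic_volume n (j - int i - 1)" for i
  define e where "e i = (s - s') / 2 * real i + real n * (real_of_int j - real i) / p" for i
  define lam where "lam i = \<delta> * 2 powr (- e i)" for i
  have weight: "ennreal ((2 powr ((s - s')/2))^i) * ennreal (t i powr (1/p)) = ennreal (2 powr e i)" for i
    by (simp add: t_def e_def dyadic_volume_def ennreal_mult[symmetric] powr_power powr_powr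
        powr_add[symmetric] add_divide_distrib mult.commute)
  have lam: "rearr g (t i) \<le> ennreal (lam i)" for i
  proof -
    have "ennreal (2 powr e i) * rearr g (t i) \<le> ennreal \<delta>"
      using samples[of i] by (simp add: lorentz_sample_def t_def n_def weight[symmetric] mult.assoc)
    then have "rearr g (t i) \<le> ennreal (1 / 2 powr e i) * ennreal \<delta>"
      by (rule ennreal_le_divide_of_mult_le) simp
    then show ?thesis
      using \<delta> by (simp add: lam_def powr_minus_divide ennreal_mult[symmetric] mult.commute)
  qed
  have "(\<integral>\<^sup>+x. ennreal (\<bar>g x\<bar> powr q) * indicator (annulus j) x \<partial>lebesgue)
      \<le> (\<Sum>i. ennreal (lam i powr q) * ennreal (dyadic_volume n (j - int i)))"
  proof (rule nn_integral_powr_le_rearr_layers[OF g annulus_lebesgue q _ _ lam])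
    show "\<exists>i. t i < e" if "0 < e" for e
      using dyadic_volume_eventually_less[OF n that, of "j - 1"] by (auto simp: t_def algebra_simps)
    show "emeasure lebesgue (annulus j :: 'a set) \<le> ennreal (dyadic_volume n (j - int 0))"
      using emeasure_annulus_le[of j, where 'a='a] by (simp add: n_def)
    show "ennreal (t i) \<le> ennreal (dyadic_volume n (j - int (Suc i)))" for i
      by (simp add: t_def algebra_simps)
  qed (use \<delta> in \<open>simp add: lam_def\<close>)
  also have "\<dots> = (\<Sum>i. ennreal (\<delta> powr q * 2 powr (real n + \<beta> * real_of_int j) * \<rho>^i))"
  proof -
    have "lam i powr q * dyadic_volume n (j - int i) = \<delta> powr q * 2 powr (real n + \<beta> * real_of_int j) * \<rho>^i" for i
    proof -
      have "q * real n / p = real n - \<beta>"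
        using bal q p by (simp add: \<beta>_def n_def field_simps)
      then have "q * (real n * (real_of_int j - real i) / p) = (real n - \<beta>) * (real_of_int j - real i)"
        by (metis times_divide_eq_right mult.assoc mult.commute)
      then have exponent: "- q * e i + real n * (real_of_int j - real i + 1)
          = (real n + \<beta> * real_of_int j) + real i * (- \<beta> / 2)"
        by (simp add: e_def \<beta>_def algebra_simps diff_divide_distrib)
      have "lam i powr q * dyadic_volume n (j - int i)
          = \<delta> powr q * (2 powr (- q * e i) * 2 powr (real n * (real_of_int j - real i + 1)))"
        using \<delta> by (simp add: lam_def dyadic_volume_def powr_mult powr_powr mult.commute)
      also have "\<dots> = \<delta> powr q * 2 powr (real n + \<beta> * real_of_int j) * \<rho>^i"
        by (simp only: powr_add[symmetric] exponent, subst powr_add) (simp add: \<rho>_def powr_power mult.assoc)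
      finally show ?thesis .
    qed
    then show ?thesis
      using \<delta> by (simp add: ennreal_mult[symmetric] dyadic_volume_pos less_imp_le)
  qed
  also have "\<dots> = ennreal (\<delta> powr q * 2 powr (real n + \<beta> * real_of_int j) / (1 - \<rho>))"
    using \<rho> sums_mult[OF geometric_sums[of \<rho>], of "\<delta> powr q * 2 powr (real n + \<beta> * real_of_int j)"]
    by (intro suminf_ennreal_eq) (auto simp: divide_inverse)
  finally show ?thesis
    by (simp add: n_def \<beta>_def \<rho>_def)
qed

lemma herz_block_le_lorentz_samples:
  fixes f :: "'a::euclidean_space \<Rightarrow> real"
  assumes f [measurable]: "f \<in> borel_measurable lebesgue"
    and p: "0 < p" and q: "0 < q" and ss: "s < s'"
    and bal: "s' - s = real DIM('a) * (1/q - 1/p)" and \<delta>: "0 \<le> \<delta>"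
    and samples: "\<And>i::nat. ennreal ((2 powr ((s - s')/2))^i)
                     * lorentz_sample p DIM('a) (\<lambda>x. norm x powr s' * f x) (j - int i - 1) \<le> ennreal \<delta>"
  shows "ennreal (2 powr (real_of_int j * s)) * Lq_norm (ennreal q) (\<lambda>x. f x * indicator (annulus j) x)
         \<le> ennreal (max 1 (2 powr s') * (2 powr real DIM('a) / (1 - 2 powr (- q * (s' - s) / 2))) powr (1/q) * \<delta>)"
proof -
  define g where "g = (\<lambda>x::'a. norm x powr s' * f x)"
  have g: "g \<in> borel_measurable lebesgue"
    unfolding g_def by measurable
  define K where "K = max 1 ((2::real) powr s')"
  define D where "D = 2 powr real DIM('a) / (1 - 2 powr (- q * (s' - s) / 2))"
  have D: "0 < D"
    using ss q by (simp add: D_def powr_less_one)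
  define Y where "Y = K * 2 powr (- real_of_int j * s) * D powr (1/q) * \<delta>"
  have Y: "0 \<le> Y"
    using \<delta> by (simp add: Y_def K_def)
  have "(\<integral>\<^sup>+x. ennreal (\<bar>f x * indicator (annulus j) x\<bar> powr q) \<partial>lebesgue)
      = (\<integral>\<^sup>+x. ennreal (\<bar>norm x powr (- s') * g x\<bar> powr q) * indicator (annulus j) x \<partial>lebesgue)"
    by (intro nn_integral_cong)
      (auto simp: g_def powr_minus field_simps annulus_def split: split_indicator)
  also have "\<dots> \<le> ennreal ((K * 2 powr (real_of_int j * - s')) powr q)
      * (\<integral>\<^sup>+x. ennreal (\<bar>g x\<bar> powr q) * indicator (annulus j) x \<partial>lebesgue)"
    using nn_integral_annulus_weight_le[OF q g, of "- s'" j] by (simp add: K_def)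
  also have "\<dots> \<le> ennreal ((K * 2 powr (real_of_int j * - s')) powr q)
      * ennreal (\<delta> powr q * 2 powr (real DIM('a) + q * (s' - s) * real_of_int j)
                  / (1 - 2 powr (- q * (s' - s) / 2)))"
    unfolding g_def
    by (intro mult_left_mono nn_integral_annulus_le_lorentz_samples[OF _ p q ss bal \<delta> samples]) auto
  also have "\<dots> = ennreal ((K * 2 powr (real_of_int j * - s')) powr q
      * (\<delta> powr q * 2 powr (real DIM('a) + q * (s' - s) * real_of_int j) / (1 - 2 powr (- q * (s' - s) / 2))))"
    by (rule ennreal_mult'[symmetric]) simp
  also have "(K * 2 powr (real_of_int j * - s')) powr q
      * (\<delta> powr q * 2 powr (real DIM('a) + q * (s' - s) * real_of_int j) / (1 - 2 powr (- q * (s' - s) / 2)))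
      = K powr q * D * \<delta> powr q * 2 powr (- real_of_int j * s * q)"
  proof -
    have "- real_of_int j * s' * q + q * (s' - s) * real_of_int j = - real_of_int j * s * q"
      by (simp add: algebra_simps)
    then show ?thesis
      by (simp add: D_def K_def powr_mult powr_powr powr_add[symmetric] field_simps)
  qed
  also have "\<dots> = Y powr q"
    using D \<delta> q by (simp add: Y_def K_def powr_mult powr_powr)
  finally have integral: "(\<integral>\<^sup>+x. ennreal (\<bar>f x * indicator (annulus j) x\<bar> powr q) \<partial>lebesgue)
      \<le> ennreal (Y powr q)" .
  have "Lq_norm (ennreal q) (\<lambda>x. f x * indicator (annulus j) x)
      = epow (\<integral>\<^sup>+x. ennreal (\<bar>f x * indicator (annulus j) x\<bar> powr q) \<partial>lebesgue) (1/q)"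
    using q by (simp add: Lq_norm_def)
  also have "\<dots> \<le> epow (ennreal (Y powr q)) (1/q)"
    using q integral by (intro epow_mono) auto
  also have "\<dots> = ennreal Y"
    using q Y by (simp add: epow_ennreal powr_powr)
  finally have "Lq_norm (ennreal q) (\<lambda>x. f x * indicator (annulus j) x) \<le> ennreal Y" .
  then have "ennreal (2 powr (real_of_int j * s)) * Lq_norm (ennreal q) (\<lambda>x. f x * indicator (annulus j) x)
      \<le> ennreal (2 powr (real_of_int j * s) * Y)"
    using Y by (simp add: ennreal_mult mult_left_mono)
  also have "2 powr (real_of_int j * s) * Y = K * D powr (1/q) * \<delta>"
    by (simp add: Y_def powr_minus field_simps)
  finally show ?thesis
    by (simp add: K_def D_def)
qed

lemma herz_norm_le_wlorentz_norm:
  fixes s s' p :: real and q r :: ennreal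
  assumes p: "0 < p" and q: "0 < q" and r: "0 < r" and ss: "s < s'"
    and bal: "s' - s = real DIM('a::euclidean_space) * (recip q - 1/p)"
  shows "\<exists>C>0. \<forall>f::'a \<Rightarrow> real. f \<in> borel_measurable lebesgue \<longrightarrow>
           herz_norm s q r f \<le> ennreal C * wlorentz_norm p r s' f"
proof -
  have "0 < real DIM('a) / p"
    using p by simp
  then have "q \<noteq> \<infinity>"
    using bal ss by (auto simp: recip_def)
  then obtain qq where qq: "q = ennreal qq" "0 < qq"
    using q enn2real_positive_finite by blast
  then have bal': "s' - s = real DIM('a) * (1/qq - 1/p)"
    using bal by (simp add: recip_ennreal)
  define \<theta> where "\<theta> = (2::real) powr ((s - s') / 2)"
  have \<theta>: "0 \<le> \<theta>" "\<theta> < 1"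
    using ss by (auto simp: \<theta>_def intro!: powr_less_one)
  define K where "K = max 1 (2 powr s') * (2 powr real DIM('a) / (1 - 2 powr (- qq * (s' - s) / 2))) powr (1/qq)"
  have K: "0 < K"
    using ss qq by (simp add: K_def powr_less_one)
  obtain C0 where C0: "C0 > 0" "\<forall>b c. (\<forall>j. b j \<le> ennreal K * (SUP i. ennreal (\<theta>^i) * c (j - int i - 1)))
      \<longrightarrow> lr_norm r b \<le> ennreal C0 * lr_norm r c"
  proof -
    have "bij (\<lambda>j::int. j - int i - 1)" for i
      by (rule bij_betwI[where g="\<lambda>j. j + int i + 1"]) auto
    then show thesis
      using lr_norm_le_geometric_average[OF r \<theta> K, of "\<lambda>j i. j - int i - 1"] that by blast
  qed
  obtain C1 where C1: "C1 > 0" "\<forall>g::'a \<Rightarrow> real. lr_norm r (lorentz_sample p DIM('a) g) \<le> ennreal C1 * lorentz_norm p r g"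
    using lr_norm_lorentz_samples_le[OF DIM_positive p r, where 'a='a] by auto
  have "herz_norm s q r f \<le> ennreal (C0 * C1) * wlorentz_norm p r s' f"
    if f: "f \<in> borel_measurable lebesgue" for f :: "'a \<Rightarrow> real"
  proof -
    let ?c = "lorentz_sample p DIM('a) (\<lambda>x. norm x powr s' * f x)"
    have "ennreal (2 powr (real_of_int j * s)) * Lq_norm q (\<lambda>x. f x * indicator (annulus j) x)
        \<le> ennreal K * (SUP i. ennreal (\<theta>^i) * ?c (j - int i - 1))" for j
      using K herz_block_le_lorentz_samples[OF f p qq(2) ss bal'] unfolding qq(1) \<theta>_def K_def
      by (intro le_mult_SUP_of_real_bounds) (auto simp: mult.assoc)
    then have "herz_norm s q r f \<le> ennreal C0 * lr_norm r ?c"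
      unfolding herz_norm_eq_lr_norm by (intro C0(2)[rule_format] allI)
    also have "\<dots> \<le> ennreal C0 * (ennreal C1 * wlorentz_norm p r s' f)"
      unfolding wlorentz_norm_def using C1(2) by (intro mult_left_mono) auto
    finally show ?thesis
      using C0 C1 by (simp add: ennreal_mult mult.assoc)
  qed
  then show ?thesis
    using C0 C1 by (intro exI[of _ "C0 * C1"]) auto
qed

section \<open>Lorentz samples bounded by Herz blocks\<close>

lemma emeasure_le_ball_plus_annuli:
  assumes E: "E \<in> sets lebesgue"
  shows "emeasure lebesgue E \<le> ennreal (dyadic_volume DIM('a::euclidean_space) (k - 1))
           + (\<Sum>i. emeasure lebesgue (annulus (k + int i) \<inter> E :: 'a set))"
proof -
  define B where "B = {x::'a. norm x < 2 powr real_of_int (k - 1)}"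
  define U where "U i = annulus (k + int i) \<inter> E" for i :: nat
  have U: "U i \<in> sets lebesgue" for i
    using E by (simp add: U_def)
  have B: "B \<in> sets lebesgue"
    unfolding B_def by (rule ball_lebesgue)
  have "E \<subseteq> B \<union> (\<Union>i. U i)"
  proof
    fix x assume x: "x \<in> E"
    show "x \<in> B \<union> (\<Union>i. U i)"
    proof (cases "x \<in> B")
      case False
      then have "x \<noteq> 0"
        by (auto simp: B_def)
      define j where "j = \<lfloor>log 2 (norm x)\<rfloor> + 1"
      have xj: "x \<in> annulus j"
        unfolding j_def by (rule mem_annulus_log[OF \<open>x \<noteq> 0\<close>])
      have "2 powr real_of_int (k - 1) \<le> norm x" "norm x < 2 powr real_of_int j"
        using False xj by (auto simp: B_def annulus_def)
      then have "2 powr real_of_int (k - 1) < 2 powr real_of_int j"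
        by linarith
      then have "k + int (nat (j - k)) = j"
        by simp
      then have "x \<in> U (nat (j - k))"
        using xj x by (simp add: U_def)
      then show ?thesis by blast
    qed simp
  qed
  then have "emeasure lebesgue E \<le> emeasure lebesgue B + emeasure lebesgue (\<Union>i. U i)"
    using B U by (intro order_trans[OF emeasure_mono emeasure_subadditive]) auto
  also have "\<dots> \<le> ennreal (dyadic_volume DIM('a) (k - 1)) + (\<Sum>i. emeasure lebesgue (U i))"
    using U unfolding B_def by (intro add_mono emeasure_dyadic_ball_le emeasure_subadditive_countably) auto
  finally show ?thesis
    by (simp add: U_def)
qed

lemma emeasure_level_set_le_nn_integral:
  fixes g :: "'a::euclidean_space \<Rightarrow> real"
  assumes [measurable]: "g \<in> borel_measurable lebesgue" "A \<in> sets lebesgue" and "0 < l" "0 < q"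
  shows "emeasure lebesgue (A \<inter> {x. l < \<bar>g x\<bar>})
         \<le> ennreal (1 / l powr q) * (\<integral>\<^sup>+x. ennreal (\<bar>g x\<bar> powr q) * indicator A x \<partial>lebesgue)"
proof -
  have "A \<inter> {x. l < \<bar>g x\<bar>} \<in> sets lebesgue"
    using lebesgue_set_less[of "\<lambda>x. \<bar>g x\<bar>"] by simp
  then have "emeasure lebesgue (A \<inter> {x. l < \<bar>g x\<bar>}) = (\<integral>\<^sup>+x. indicator (A \<inter> {x. l < \<bar>g x\<bar>}) x \<partial>lebesgue)"
    by simp
  also have "\<dots> \<le> (\<integral>\<^sup>+x. ennreal (1 / l powr q) * (ennreal (\<bar>g x\<bar> powr q) * indicator A x) \<partial>lebesgue)"
  proof (intro nn_integral_mono)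
    fix x
    have "1 \<le> 1 / l powr q * \<bar>g x\<bar> powr q" if "l < \<bar>g x\<bar>"
      using assms that by (simp add: le_divide_eq powr_mono2)
    then show "indicator (A \<inter> {x. l < \<bar>g x\<bar>}) x \<le> ennreal (1 / l powr q) * (ennreal (\<bar>g x\<bar> powr q) * indicator A x)"
      by (auto split: split_indicator simp: ennreal_mult[symmetric] ennreal_leI simp del: ennreal_1
          intro: order_trans[OF _ ennreal_leI, of 1, simplified])
  qed
  also have "\<dots> = ennreal (1 / l powr q) * (\<integral>\<^sup>+x. ennreal (\<bar>g x\<bar> powr q) * indicator A x \<partial>lebesgue)"
    by (rule nn_integral_cmult) measurable
  finally show ?thesis .
qed

lemma rearr_dyadic_le_of_annulus_integrals:
  fixes g :: "'a::euclidean_space \<Rightarrow> real"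
  assumes g [measurable]: "g \<in> borel_measurable lebesgue"
    and q: "0 < q" and X: "0 \<le> X" and \<rho>: "0 \<le> \<rho>" "\<rho> < 1"
    and blocks: "\<And>i::nat. (\<integral>\<^sup>+x. ennreal (\<bar>g x\<bar> powr q) * indicator (annulus (k + int i)) x \<partial>lebesgue)
                    \<le> ennreal (X * \<rho>^i)"
  shows "rearr g (dyadic_volume DIM('a) k)
         \<le> ennreal ((X / ((1 - \<rho>) * (dyadic_volume DIM('a) k - dyadic_volume DIM('a) (k - 1)))) powr (1/q))"
proof (rule rearr_le_of_level_sets)
  let ?d = "dyadic_volume DIM('a)"
  let ?D = "(1 - \<rho>) * (?d k - ?d (k - 1))"
  have D: "0 < ?D"
    using \<rho> dyadic_volume_step[of "DIM('a)" k] dyadic_volume_pos[of "DIM('a)" "k - 1"] by simp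
  show "0 \<le> (X / ?D) powr (1/q)"
    by simp
  fix l assume l: "(X / ?D) powr (1/q) < l"
  then have l0: "0 < l"
    by (meson le_less_trans powr_ge_zero)
  have "X / ?D = ((X / ?D) powr (1/q)) powr q"
    using X D q by (simp add: powr_powr)
  also have "\<dots> \<le> l powr q"
    using l q by (intro powr_mono2) auto
  finally have "X / (1 - \<rho>) / l powr q \<le> ?d k - ?d (k - 1)"
    using D l0 \<rho> by (simp add: field_simps)
  have level: "{x. l < \<bar>g x\<bar>} \<in> sets lebesgue"
    using lebesgue_set_less[of "\<lambda>x. \<bar>g x\<bar>"] by simp
  have "(\<Sum>i. emeasure lebesgue (annulus (k + int i) \<inter> {x. l < \<bar>g x\<bar>}))
      \<le> (\<Sum>i. ennreal (1 / l powr q) * ennreal (X * \<rho>^i))"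
    by (intro suminf_le summableI order_trans[OF emeasure_level_set_le_nn_integral[OF g annulus_lebesgue l0 q]]
        mult_left_mono blocks) simp_all
  also have "\<dots> = ennreal (1 / l powr q) * ennreal (X / (1 - \<rho>))"
    using \<rho> X sums_mult[OF geometric_sums[of \<rho>], of X]
    by (subst ennreal_suminf_cmult) (simp add: suminf_ennreal_eq divide_inverse sums_iff)
  also have "\<dots> = ennreal (1 / l powr q * (X / (1 - \<rho>)))"
    by (rule ennreal_mult'[symmetric]) simp
  also have "\<dots> \<le> ennreal (?d k - ?d (k - 1))"
    using \<open>X / (1 - \<rho>) / l powr q \<le> ?d k - ?d (k - 1)\<close> by (intro ennreal_leI) (simp add: mult.commute)
  finally have "emeasure lebesgue {x. l < \<bar>g x\<bar>} \<le> ennreal (?d (k - 1)) + ennreal (?d k - ?d (k - 1))"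
    using emeasure_le_ball_plus_annuli[OF level, of k] by (meson add_left_mono order_trans)
  also have "\<dots> = ennreal (?d k)"
    using dyadic_volume_mono[of "k - 1" k "DIM('a)"] dyadic_volume_pos[of "DIM('a)" "k - 1"]
    by (simp flip: ennreal_plus)
  finally show "emeasure lebesgue {x. l < \<bar>g x\<bar>} \<le> ennreal (?d k)" .
qed

lemma rearr_dyadic_le_of_annulus_bounds:
  fixes g :: "'a::euclidean_space \<Rightarrow> real"
  assumes g [measurable]: "g \<in> borel_measurable lebesgue" and "0 \<le> lam"
    and blocks: "\<And>i l. lam < l \<Longrightarrow> annulus (k + int i) \<inter> {x. l < \<bar>g x\<bar>} \<in> null_sets lebesgue"
  shows "rearr g (dyadic_volume DIM('a) k) \<le> ennreal lam"
proof (rule rearr_le_of_level_sets[OF \<open>0 \<le> lam\<close>])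
  fix l assume "lam < l"
  have "{x. l < \<bar>g x\<bar>} \<in> sets lebesgue"
    using lebesgue_set_less[of "\<lambda>x. \<bar>g x\<bar>"] by simp
  then have "emeasure lebesgue {x. l < \<bar>g x\<bar>}
      \<le> ennreal (dyadic_volume DIM('a) (k - 1)) + (\<Sum>i. emeasure lebesgue (annulus (k + int i) \<inter> {x. l < \<bar>g x\<bar>}))"
    by (rule emeasure_le_ball_plus_annuli)
  also have "\<dots> = ennreal (dyadic_volume DIM('a) (k - 1))"
    using null_setsD1[OF blocks[OF \<open>lam < l\<close>]] by (simp del: emeasure_completion)
  also have "\<dots> \<le> ennreal (dyadic_volume DIM('a) k)"
    by (intro ennreal_leI dyadic_volume_mono) simp
  finally show "emeasure lebesgue {x. l < \<bar>g x\<bar>} \<le> ennreal (dyadic_volume DIM('a) k)" .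
qed

lemma nn_integral_weighted_annulus_le:
  fixes f :: "'a::euclidean_space \<Rightarrow> real"
  assumes f: "f \<in> borel_measurable lebesgue" and q: "0 < q" and B: "0 \<le> B"
    and Lq: "Lq_norm (ennreal q) (\<lambda>x. f x * indicator (annulus j) x) \<le> ennreal B"
  shows "(\<integral>\<^sup>+x. ennreal (\<bar>norm x powr a * f x\<bar> powr q) * indicator (annulus j) x \<partial>lebesgue)
         \<le> ennreal ((max 1 (2 powr (-a)) * 2 powr (real_of_int j * a) * B) powr q)"
proof -
  let ?M = "max 1 (2 powr (-a)) * 2 powr (real_of_int j * a)"
  have "(\<integral>\<^sup>+x. ennreal (\<bar>f x\<bar> powr q) * indicator (annulus j) x \<partial>lebesgue)
      = epow (Lq_norm (ennreal q) (\<lambda>x. f x * indicator (annulus j) x)) q"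
    using q by (simp add: Lq_norm_def, intro nn_integral_cong) (simp split: split_indicator)
  also have "\<dots> \<le> epow (ennreal B) q"
    using q Lq by (intro epow_mono) auto
  finally have "(\<integral>\<^sup>+x. ennreal (\<bar>f x\<bar> powr q) * indicator (annulus j) x \<partial>lebesgue) \<le> ennreal (B powr q)"
    using B by (simp add: epow_ennreal)
  then have "(\<integral>\<^sup>+x. ennreal (\<bar>norm x powr a * f x\<bar> powr q) * indicator (annulus j) x \<partial>lebesgue)
      \<le> ennreal (?M powr q) * ennreal (B powr q)"
    using nn_integral_annulus_weight_le[OF q f, of a j] by (meson mult_left_mono order_trans zero_le)
  also have "\<dots> = ennreal ((?M * B) powr q)"
    using B by (simp add: ennreal_mult[symmetric] powr_mult)
  finally show ?thesis .
qed

lemma lorentz_sample_le_herz_blocks: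
  fixes f :: "'a::euclidean_space \<Rightarrow> real"
  assumes f [measurable]: "f \<in> borel_measurable lebesgue"
    and p: "0 < p" and q: "0 < q" and ss: "s' < s"
    and bal: "s - s' = real DIM('a) * (1/p - 1/q)" and \<epsilon>: "0 \<le> \<epsilon>"
    and blocks: "\<And>i::nat. ennreal ((2 powr ((s' - s)/2))^i) * (ennreal (2 powr (real_of_int (k + int i) * s))
                    * Lq_norm (ennreal q) (\<lambda>x. f x * indicator (annulus (k + int i)) x)) \<le> ennreal \<epsilon>"
  shows "lorentz_sample p DIM('a) (\<lambda>x. norm x powr s' * f x) k
         \<le> ennreal (max 1 (2 powr (-s')) * 2 powr (real DIM('a) / p)
              * (1 / ((1 - 2 powr (- q * (s - s') / 2)) * (2 powr real DIM('a) - 1))) powr (1/q) * \<epsilon>)"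
proof -
  define n where "n = DIM('a)"
  define g where "g = (\<lambda>x::'a. norm x powr s' * f x)"
  have g: "g \<in> borel_measurable lebesgue"
    unfolding g_def by measurable
  define K where "K = max 1 ((2::real) powr (-s'))"
  define \<rho> where "\<rho> = (2::real) powr (- q * (s - s') / 2)"
  have \<rho>: "0 \<le> \<rho>" "\<rho> < 1"
    using ss q by (auto simp: \<rho>_def intro!: powr_less_one)
  define X where "X = (K * \<epsilon> * 2 powr (- (s - s') * real_of_int k)) powr q"
  have "(\<integral>\<^sup>+x. ennreal (\<bar>g x\<bar> powr q) * indicator (annulus (k + int i)) x \<partial>lebesgue) \<le> ennreal (X * \<rho>^i)"
    for i
  proof -
    let ?j = "k + int i"
    define B where "B = \<epsilon> / ((2 powr ((s' - s)/2))^i * 2 powr (real_of_int ?j * s))"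
    have B: "0 \<le> B"
      using \<epsilon> by (simp add: B_def)
    have "Lq_norm (ennreal q) (\<lambda>x. f x * indicator (annulus ?j) x) \<le> ennreal B"
      using blocks[of i] \<epsilon> unfolding B_def by (intro ennreal_le_divide_of_mult_mult_le) auto
    then have "(\<integral>\<^sup>+x. ennreal (\<bar>g x\<bar> powr q) * indicator (annulus ?j) x \<partial>lebesgue)
        \<le> ennreal ((K * 2 powr (real_of_int ?j * s') * B) powr q)"
      unfolding g_def K_def by (rule nn_integral_weighted_annulus_le[OF f q B])
    also have "K * 2 powr (real_of_int ?j * s') * B = K * \<epsilon> * 2 powr (- (s - s') * real_of_int k) * 2 powr (- (s - s') / 2 * real i)"
      by (simp add: B_def powr_power powr_add[symmetric] powr_diff[symmetric] field_simps)
        (simp add: add_divide_distrib)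
    also have "ennreal (\<dots> powr q) = ennreal (X * \<rho>^i)"
    proof -
      have "(2 powr (- (s - s') / 2 * real i)) powr q = 2 powr (real i * (- q * (s - s') / 2))"
        unfolding powr_powr by (rule arg_cong[where f="(powr) 2"]) (simp add: algebra_simps)
      then have "(2 powr (- (s - s') / 2 * real i)) powr q = \<rho> ^ i"
        by (simp add: \<rho>_def powr_power)
      then show ?thesis
        using \<epsilon> by (simp add: X_def K_def powr_mult)
    qed
    finally show ?thesis .
  qed
  then have "rearr g (dyadic_volume n k)
      \<le> ennreal ((X / ((1 - \<rho>) * (dyadic_volume n k - dyadic_volume n (k - 1)))) powr (1/q))"
    unfolding n_def by (intro rearr_dyadic_le_of_annulus_integrals[OF g q _ \<rho>]) (simp_all add: X_def)
  then have "lorentz_sample p n g k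
      \<le> ennreal (dyadic_volume n k powr (1/p) * (X / ((1 - \<rho>) * (dyadic_volume n k - dyadic_volume n (k - 1)))) powr (1/q))"
    unfolding lorentz_sample_def by (simp add: ennreal_mult mult_left_mono)
  also have "dyadic_volume n k powr (1/p) * (X / ((1 - \<rho>) * (dyadic_volume n k - dyadic_volume n (k - 1)))) powr (1/q)
      = K * 2 powr (real n / p) * (1 / ((1 - \<rho>) * (2 powr real n - 1))) powr (1/q) * \<epsilon>"
  proof -
    define c where "c = 1 / ((1 - \<rho>) * (2 powr real n - 1))"
    have c: "0 < c"
      using \<rho> by (simp add: c_def n_def)
    have "real n / p - real n / q = s - s'"
      using bal by (simp add: n_def algebra_simps)
    then have "(real n / p - real n / q - (s - s')) * real_of_int k = 0"
      by simp
    then have "real n * (real_of_int k + 1) / p + - (s - s') * real_of_int k + - (real n * real_of_int k) / q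
        = real n / p"
      by (simp add: algebra_simps add_divide_distrib)
    then have exponent: "2 powr (real n * (real_of_int k + 1) / p) * 2 powr (- (s - s') * real_of_int k)
        * 2 powr (- (real n * real_of_int k) / q) = 2 powr (real n / p)"
      by (simp only: powr_add[symmetric])
    have "X / ((1 - \<rho>) * (dyadic_volume n k - dyadic_volume n (k - 1)))
        = c * X * 2 powr (- (real n * real_of_int k))"
      by (simp add: c_def dyadic_volume_def powr_minus_divide powr_add[symmetric] field_simps)
    also have "(\<dots>) powr (1/q) = c powr (1/q) * (K * \<epsilon>) * 2 powr (- (s - s') * real_of_int k)
        * 2 powr (- (real n * real_of_int k) / q)"
      using c q \<epsilon> by (simp add: X_def K_def powr_mult powr_powr)
    finally show ?thesis
      using exponent[symmetric] by (simp add: dyadic_volume_def powr_powr c_def mult_ac)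
  qed
  finally show ?thesis
    by (simp add: g_def n_def K_def \<rho>_def)
qed

lemma null_sets_weighted_level_set:
  fixes f w :: "'a::euclidean_space \<Rightarrow> real"
  assumes [measurable]: "f \<in> borel_measurable lebesgue" "w \<in> borel_measurable lebesgue" "A \<in> sets lebesgue"
    and M: "0 < M" and w: "\<And>x. x \<in> A \<Longrightarrow> \<bar>w x\<bar> \<le> M"
    and Lq: "Lq_norm \<infinity> (\<lambda>x. f x * indicator A x) < ennreal (l / M)"
  shows "A \<inter> {x. l < \<bar>w x * f x\<bar>} \<in> null_sets lebesgue"
proof -
  obtain C where C: "AE x in lebesgue. ennreal \<bar>f x * indicator A x\<bar> \<le> C" "C < ennreal (l / M)"
    using Lq unfolding Lq_norm_def by (auto simp: Inf_less_iff)
  have "AE x in lebesgue. x \<notin> A \<inter> {x. l < \<bar>w x * f x\<bar>}"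
    using C(1)
  proof eventually_elim
    case (elim x)
    show ?case
    proof
      assume x: "x \<in> A \<inter> {x. l < \<bar>w x * f x\<bar>}"
      then have "ennreal \<bar>f x\<bar> < ennreal (l / M)"
        using elim C(2) by (simp add: le_less_trans)
      then have "\<bar>f x\<bar> < l / M"
        by (simp add: ennreal_less_iff)
      then have "\<bar>w x * f x\<bar> < M * (l / M)"
        unfolding abs_mult using M w[of x] x
        by (intro le_less_trans[OF mult_right_mono mult_strict_left_mono]) auto
      then show False
        using x M by simp
    qed
  qed
  moreover have "A \<inter> {x. l < \<bar>w x * f x\<bar>} \<in> sets lebesgue"
    using lebesgue_set_less[of "\<lambda>x. \<bar>w x * f x\<bar>"] by simp
  ultimately show ?thesis
    by (simp add: AE_iff_null_sets)
qed

lemma lorentz_sample_le_herz_blocks_infinity: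
  fixes f :: "'a::euclidean_space \<Rightarrow> real"
  assumes f [measurable]: "f \<in> borel_measurable lebesgue"
    and p: "0 < p" and bal: "s - s' = real DIM('a) / p" and \<epsilon>: "0 \<le> \<epsilon>"
    and blocks: "\<And>i::nat. ennreal ((2 powr ((s' - s)/2))^i) * (ennreal (2 powr (real_of_int (k + int i) * s))
                    * Lq_norm \<infinity> (\<lambda>x. f x * indicator (annulus (k + int i)) x)) \<le> ennreal \<epsilon>"
  shows "lorentz_sample p DIM('a) (\<lambda>x. norm x powr s' * f x) k
         \<le> ennreal (max 1 (2 powr (-s')) * 2 powr (real DIM('a) / p) * \<epsilon>)"
proof -
  define n where "n = DIM('a)"
  define g where "g = (\<lambda>x::'a. norm x powr s' * f x)"
  have g: "g \<in> borel_measurable lebesgue"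
    unfolding g_def by measurable
  have ss: "0 < s - s'"
    using bal p by simp
  define K where "K = max 1 ((2::real) powr (-s'))"
  define lam where "lam = K * \<epsilon> * 2 powr (- (s - s') * real_of_int k)"
  have lam: "0 \<le> lam"
    using \<epsilon> by (simp add: lam_def K_def)
  have "annulus (k + int i) \<inter> {x. l < \<bar>g x\<bar>} \<in> null_sets lebesgue" if l: "lam < l" for i l
  proof -
    let ?j = "k + int i"
    define M where "M = K * 2 powr (real_of_int ?j * s')"
    have M: "0 < M"
      by (simp add: M_def K_def)
    define B where "B = \<epsilon> / ((2 powr ((s' - s)/2))^i * 2 powr (real_of_int ?j * s))"
    have "Lq_norm \<infinity> (\<lambda>x. f x * indicator (annulus ?j) x) \<le> ennreal B"
      using blocks[of i] \<epsilon> unfolding B_def by (intro ennreal_le_divide_of_mult_mult_le) auto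
    moreover have "M * B \<le> lam"
    proof -
      have "M * B = K * \<epsilon> * 2 powr (- (s - s') * real_of_int k - (s - s') / 2 * real i)"
        by (simp add: M_def B_def powr_power powr_add[symmetric] powr_diff[symmetric] field_simps)
          (simp add: add_divide_distrib)
      also have "\<dots> \<le> lam"
        unfolding lam_def using ss \<epsilon> by (intro mult_left_mono powr_mono) (auto simp: K_def)
      finally show ?thesis .
    qed
    then have "B < l / M"
      using l M by (simp add: field_simps mult.commute)
    moreover have "0 \<le> B"
      using \<epsilon> by (simp add: B_def)
    ultimately have "Lq_norm \<infinity> (\<lambda>x. f x * indicator (annulus ?j) x) < ennreal (l / M)"
      by (meson ennreal_lessI le_less_trans order_le_less_trans)
    moreover have "\<bar>norm x powr s'\<bar> \<le> M" if "x \<in> annulus ?j" for x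
      using norm_powr_le_on_annulus[OF that, of s'] by (simp add: M_def K_def)
    ultimately show ?thesis
      unfolding g_def by (intro null_sets_weighted_level_set[OF f _ annulus_lebesgue M]) auto
  qed
  then have "rearr g (dyadic_volume n k) \<le> ennreal lam"
    unfolding n_def by (rule rearr_dyadic_le_of_annulus_bounds[OF g lam])
  then have "lorentz_sample p n g k \<le> ennreal (dyadic_volume n k powr (1/p) * lam)"
    unfolding lorentz_sample_def using lam by (simp add: ennreal_mult mult_left_mono)
  also have "dyadic_volume n k powr (1/p) * lam = K * 2 powr (real n / p) * \<epsilon>"
  proof -
    have "real n * (real_of_int k + 1) / p + - (s - s') * real_of_int k = real n / p"
      using bal by (simp add: n_def add_divide_distrib algebra_simps)
    then show ?thesis
      by (simp add: lam_def dyadic_volume_def powr_powr mult_ac flip: powr_add) (metis add.commute)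
  qed
  finally show ?thesis
    by (simp add: g_def n_def K_def)
qed

lemma wlorentz_norm_le_herz_norm:
  fixes s s' p :: real and q r :: ennreal
  assumes p: "0 < p" and q: "0 < q" and r: "0 < r" and ss: "s' < s"
    and bal: "s - s' = real DIM('a::euclidean_space) * (1/p - recip q)"
  shows "\<exists>C>0. \<forall>f::'a \<Rightarrow> real. f \<in> borel_measurable lebesgue \<longrightarrow>
           wlorentz_norm p r s' f \<le> ennreal C * herz_norm s q r f"
proof -
  define \<theta> where "\<theta> = (2::real) powr ((s' - s) / 2)"
  have \<theta>: "0 \<le> \<theta>" "\<theta> < 1"
    using ss by (auto simp: \<theta>_def intro!: powr_less_one)
  define b where "b f j = ennreal (2 powr (real_of_int j * s)) * Lq_norm q (\<lambda>x. f x * indicator (annulus j) x)"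
    for f :: "'a \<Rightarrow> real" and j
  obtain K where K: "0 < K" and samples: "\<And>f k \<delta>. f \<in> borel_measurable lebesgue \<Longrightarrow> 0 \<le> \<delta> \<Longrightarrow>
      (\<And>i. ennreal (\<theta>^i) * b f (k + int i) \<le> ennreal \<delta>) \<Longrightarrow>
      lorentz_sample p DIM('a) (\<lambda>x. norm x powr s' * f x) k \<le> ennreal (K * \<delta>)"
  proof (cases "q = \<infinity>")
    case True
    then have "s - s' = real DIM('a) / p"
      using bal by (simp add: recip_def)
    then show thesis
      using lorentz_sample_le_herz_blocks_infinity[OF _ p, where 'a='a]
      by (intro that[of "max 1 (2 powr (-s')) * 2 powr (real DIM('a) / p)"])
        (auto simp: b_def \<theta>_def True mult.assoc)
  next
    case False
    then obtain qq where qq: "q = ennreal qq" "0 < qq"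
      using q enn2real_positive_finite by blast
    then have bal': "s - s' = real DIM('a) * (1/p - 1/qq)"
      using bal by (simp add: recip_ennreal)
    define D where "D = (1 - 2 powr (- qq * (s - s') / 2)) * ((2::real) powr real DIM('a) - 1)"
    have "0 < D"
      using ss qq by (simp add: D_def powr_less_one)
    then have "0 < (1 / D) powr (1/qq)"
      by simp
    then show thesis
      using lorentz_sample_le_herz_blocks[OF _ p qq(2) ss bal']
      by (intro that[of "max 1 (2 powr (-s')) * 2 powr (real DIM('a) / p) * (1 / D) powr (1/qq)"])
        (auto simp: b_def \<theta>_def qq(1) D_def mult.assoc)
  qed
  obtain C0 where C0: "C0 > 0" "\<forall>c b'. (\<forall>j. c j \<le> ennreal K * (SUP i. ennreal (\<theta>^i) * b' (j + int i)))
      \<longrightarrow> lr_norm r c \<le> ennreal C0 * lr_norm r b'"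
  proof -
    have "bij (\<lambda>j::int. j + int i)" for i
      by (rule bij_betwI[where g="\<lambda>j. j - int i"]) auto
    then show thesis
      using lr_norm_le_geometric_average[OF r \<theta> K, of "\<lambda>j i. j + int i"] that by blast
  qed
  obtain C1 where C1: "C1 > 0" "\<forall>g::'a \<Rightarrow> real. lorentz_norm p r g \<le> ennreal C1 * lr_norm r (lorentz_sample p DIM('a) g)"
    using lorentz_norm_le_lr_norm_samples[OF DIM_positive p r, where 'a='a] by auto
  have "wlorentz_norm p r s' f \<le> ennreal (C1 * C0) * herz_norm s q r f"
    if f: "f \<in> borel_measurable lebesgue" for f :: "'a \<Rightarrow> real"
  proof -
    let ?c = "lorentz_sample p DIM('a) (\<lambda>x. norm x powr s' * f x)"
    have "?c k \<le> ennreal K * (SUP i. ennreal (\<theta>^i) * b f (k + int i))" for k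
      using K samples[OF f] by (intro le_mult_SUP_of_real_bounds) auto
    then have "lr_norm r ?c \<le> ennreal C0 * herz_norm s q r f"
      unfolding herz_norm_eq_lr_norm b_def[symmetric] by (intro C0(2)[rule_format] allI)
    then have "wlorentz_norm p r s' f \<le> ennreal C1 * (ennreal C0 * herz_norm s q r f)"
      unfolding wlorentz_norm_def using C1(2) by (meson mult_left_mono order_trans zero_le)
    then show ?thesis
      using C0 C1 by (simp add: ennreal_mult mult.assoc)
  qed
  then show ?thesis
    using C0 C1 by (intro exI[of _ "C1 * C0"]) auto
qed

theorem proposition5p3:
  fixes s s' p :: real and q r :: ennreal
  assumes "0 < p" and "0 < q" and "0 < r"
    and bal: "s / real DIM('a::euclidean_space) + recip q = s' / real DIM('a) + 1 / p"
  shows "(s < s' \<longrightarrow> (\<exists>C>0. \<forall>f::'a \<Rightarrow> real. f \<in> borel_measurable lebesgue \<longrightarrow>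
            herz_norm s q r f \<le> ennreal C * wlorentz_norm p r s' f))
       \<and> (s > s' \<longrightarrow> (\<exists>C>0. \<forall>f::'a \<Rightarrow> real. f \<in> borel_measurable lebesgue \<longrightarrow>
            wlorentz_norm p r s' f \<le> ennreal C * herz_norm s q r f))"
proof -
  have "s' - s = real DIM('a) * (recip q - 1/p)" "s - s' = real DIM('a) * (1/p - recip q)"
    using bal by (simp_all add: field_simps)
  then show ?thesis
    using herz_norm_le_wlorentz_norm[OF assms(1-3)] wlorentz_norm_le_herz_norm[OF assms(1-3)] by blast
qed

end
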